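(* Let $\Lambda$ be a rank-2 Bratteli diagram with levels $(V_n)$ and path groupoid $G$. There is a unique automorphism $\alpha$ of $\Lambda$ such that $\alpha(e) = \mathcal{F}^{m_n}(e)$ for all $n$ and all $e\in V_n\Lambda^{e_1}$. This $\alpha$ induces a homeomorphism, also denoted $\alpha$, of $\Lambda^\infty$ by $\alpha(x) = \alpha\circ x$, which in turn induces an automorphism $\alpha$ of the topological groupoid $G$ with $\alpha(x,m,y) = (\alpha(x),m,\alpha(y))$.
   Context: A 2-graph is a countable category $\Lambda$ with a functor $d:\Lambda\to\mathbb{N}^2$ satisfying the factorisation property; $\Lambda^m=d^{-1}(m)$, $\Lambda^0$ the vertices; row-finite means each $v\Lambda^m$ is finite. Blue edges: $\Lambda^{e_1}$; red edges: $\Lambda^{e_2}$. A cycle is $\lambda$ with $d(\lambda)\ne0$, $r(\lambda)=s(\lambda)$ and $s(\lambda')\ne s(\lambda)$ whenever $\lambda=\lambda'\lambda''$ with $0<d(\lambda')<d(\lambda)$; it is isolated if whenever $\lambda=\lambda'\lambda''$ with $d(\lambda')\ne0$, $r(\lambda)\Lambda^{d(\lambda')}\setminus\{\lambda'\}$ and $\Lambda^{d(\lambda'')}s(\lambda)\setminus\{\lambda''\}$ are empty. A rank-2 Bratteli diagram is a row-finite 2-graph whose vertex set is a disjoint union of nonempty finite sets $V_n$ ($n\ge0$) with: (1) each blue edge in some $V_n\Lambda^{e_1}V_{n+1}$; (2) the blue graph has no sources and all sinks in $V_0$; (3) every vertex lies on an isolated red cycle and $\Lambda^{e_2}=\bigcup_nV_n\Lambda^{e_2}V_n$.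 For $e\in\Lambda^{e_1}$ let $f$ be the unique element of $\Lambda^{e_2}r(e)$ and $\mathcal{F}(e)$ the unique blue edge with $fe=\mathcal{F}(e)f'$ for a red edge $f'$; $o(e)$ is the least $k>0$ with $\mathcal{F}^k(e)=e$; $O_n=\operatorname{lcm}\{o(e):e\in V_n\Lambda^{e_1}\}$; $m_0=0$, $m_{n+1}=m_n+nO_n$. An automorphism of $\Lambda$ is a degree-preserving bijective functor. $\Omega_2$ is the 2-graph with vertices $\mathbb{N}^2$ and morphisms $(n,n+m)$; $\Lambda^\infty$ is the set of degree-preserving functors $x:\Omega_2\to\Lambda$, $\sigma^p(x)(m,n)=x(m+p,n+p)$, and for $\lambda\in\Lambda$, $Z(\lambda)=\{\lambda z: z\in s(\lambda)\Lambda^\infty\}$ generates the topology. The path groupoid is $G=\{(x,l-m,y)\in\Lambda^\infty\times\mathbb{Z}^2\times\Lambda^\infty : \sigma^l(x)=\sigma^m(y)\}$ with $(x,n,y)(y,k,z)=(x,n+k,z)$, $(x,n,y)^{-1}=(y,-n,x)$, and topology with basic open sets $Z(\lambda,\mu)=\{(\lambda z,d(\lambda)-d(\mu),\mu z): z\in s(\lambda)\Lambda^\infty\}$ for $s(\lambda)=s(\mu)$. *)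

theory Defs
  imports "HOL-Analysis.Analysis" "HOL-Library.Product_Plus" "HOL-Library.Product_Order"
begin

text \<open>A 2-graph is encoded as a small category whose morphisms form a set Mor of
elements of a type 'a; objects are identified with identity morphisms.
rg / sr are range and source (returning identity morphisms), cp is composition
(cp l m = l m, defined when sr l = rg m), dg is the degree functor to N^2.\<close>

record 'a two_graph =
  Mor :: "'a set"
  rg  :: "'a \<Rightarrow> 'a"
  sr  :: "'a \<Rightarrow> 'a"
  cp  :: "'a \<Rightarrow> 'a \<Rightarrow> 'a"
  dg  :: "'a \<Rightarrow> nat \<times> nat"

definition is_2graph :: "'a two_graph \<Rightarrow> bool" where
  "is_2graph L \<longleftrightarrow>
     countable (Mor L) \<and>
     (\<forall>l\<in>Mor L. rg L l \<in> Mor L \<and> sr L l \<in> Mor L \<and>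
        rg L (rg L l) = rg L l \<and> sr L (rg L l) = rg L l \<and>
        rg L (sr L l) = sr L l \<and> sr L (sr L l) = sr L l \<and>
        cp L (rg L l) l = l \<and> cp L l (sr L l) = l) \<and>
     (\<forall>l\<in>Mor L. \<forall>m\<in>Mor L. sr L l = rg L m \<longrightarrow>
        cp L l m \<in> Mor L \<and> rg L (cp L l m) = rg L l \<and> sr L (cp L l m) = sr L m \<and>
        dg L (cp L l m) = dg L l + dg L m) \<and>
     (\<forall>l\<in>Mor L. \<forall>m\<in>Mor L. \<forall>n\<in>Mor L. sr L l = rg L m \<and> sr L m = rg L n \<longrightarrow>
        cp L (cp L l m) n = cp L l (cp L m n)) \<and>
     (\<forall>l\<in>Mor L. \<forall>p q. dg L l = p + q \<longrightarrow>
        (\<exists>!mn. fst mn \<in> Mor L \<and> snd mn \<in> Mor L \<and> dg L (fst mn) = p \<and> dg L (snd mn) = q \<and>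
               sr L (fst mn) = rg L (snd mn) \<and> cp L (fst mn) (snd mn) = l))"

definition vertices :: "'a two_graph \<Rightarrow> 'a set" where
  "vertices L = {v \<in> Mor L. dg L v = 0}"
definition blue :: "'a two_graph \<Rightarrow> 'a set" where
  "blue L = {e \<in> Mor L. dg L e = (1,0)}"
definition red :: "'a two_graph \<Rightarrow> 'a set" where
  "red L = {f \<in> Mor L. dg L f = (0,1)}"

definition row_finite :: "'a two_graph \<Rightarrow> bool" where
  "row_finite L \<longleftrightarrow> (\<forall>v\<in>vertices L. \<forall>m. finite {l \<in> Mor L. rg L l = v \<and> dg L l = m})"

definition factors :: "'a two_graph \<Rightarrow> 'a \<Rightarrow> 'a \<Rightarrow> 'a \<Rightarrow> bool" where
  "factors L l l1 l2 \<longleftrightarrow> l1 \<in> Mor L \<and> l2 \<in> Mor L \<and> sr L l1 = rg L l2 \<and> l = cp L l1 l2"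

definition is_cycle :: "'a two_graph \<Rightarrow> 'a \<Rightarrow> bool" where
  "is_cycle L l \<longleftrightarrow> l \<in> Mor L \<and> dg L l \<noteq> 0 \<and> rg L l = sr L l \<and>
     (\<forall>l1 l2. factors L l l1 l2 \<and> 0 < dg L l1 \<and> dg L l1 < dg L l \<longrightarrow> sr L l1 \<noteq> sr L l)"

definition isolated_cycle :: "'a two_graph \<Rightarrow> 'a \<Rightarrow> bool" where
  "isolated_cycle L l \<longleftrightarrow> is_cycle L l \<and>
     (\<forall>l1 l2. factors L l l1 l2 \<and> dg L l1 \<noteq> 0 \<longrightarrow>
        {m \<in> Mor L. rg L m = rg L l \<and> dg L m = dg L l1} - {l1} = {} \<and>
        {m \<in> Mor L. sr L m = sr L l \<and> dg L m = dg L l2} - {l2} = {})"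

definition red_cycle :: "'a two_graph \<Rightarrow> 'a \<Rightarrow> bool" where
  "red_cycle L l \<longleftrightarrow> is_cycle L l \<and> fst (dg L l) = 0"

definition lies_on :: "'a two_graph \<Rightarrow> 'a \<Rightarrow> 'a \<Rightarrow> bool" where
  "lies_on L v l \<longleftrightarrow> (\<exists>l1 l2. factors L l l1 l2 \<and> sr L l1 = v)"

definition rank2_bratteli :: "'a two_graph \<Rightarrow> (nat \<Rightarrow> 'a set) \<Rightarrow> bool" where
  "rank2_bratteli L V \<longleftrightarrow>
     is_2graph L \<and> row_finite L \<and>
     (\<forall>n. V n \<noteq> {} \<and> finite (V n)) \<and>
     (\<forall>n n'. n \<noteq> n' \<longrightarrow> V n \<inter> V n' = {}) \<and>
     vertices L = (\<Union>n. V n) \<and>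
     (\<forall>e\<in>blue L. \<exists>n. rg L e \<in> V n \<and> sr L e \<in> V (Suc n)) \<and>
     (\<forall>v\<in>vertices L. \<exists>e\<in>blue L. rg L e = v) \<and>
     (\<forall>v\<in>vertices L. (\<not> (\<exists>e\<in>blue L. sr L e = v)) \<longrightarrow> v \<in> V 0) \<and>
     (\<forall>v\<in>vertices L. \<exists>l. red_cycle L l \<and> isolated_cycle L l \<and> lies_on L v l) \<and>
     (\<forall>f\<in>red L. \<exists>n. rg L f \<in> V n \<and> sr L f \<in> V n)"

definition Fmap :: "'a two_graph \<Rightarrow> 'a \<Rightarrow> 'a" where
  "Fmap L e = (let f = (THE f. f \<in> red L \<and> sr L f = rg L e) in
     THE e'. e' \<in> blue L \<and> (\<exists>f'\<in>red L. sr L e' = rg L f' \<and> cp L f e = cp L e' f'))"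

definition orb :: "'a two_graph \<Rightarrow> 'a \<Rightarrow> nat" where
  "orb L e = (LEAST k. 0 < k \<and> (Fmap L ^^ k) e = e)"

definition Ord_n :: "'a two_graph \<Rightarrow> (nat \<Rightarrow> 'a set) \<Rightarrow> nat \<Rightarrow> nat" where
  "Ord_n L V n = Lcm {orb L e | e. e \<in> blue L \<and> rg L e \<in> V n}"

fun mseq :: "'a two_graph \<Rightarrow> (nat \<Rightarrow> 'a set) \<Rightarrow> nat \<Rightarrow> nat" where
  "mseq L V 0 = 0"
| "mseq L V (Suc n) = mseq L V n + n * Ord_n L V n"

definition is_automorphism :: "'a two_graph \<Rightarrow> ('a \<Rightarrow> 'a) \<Rightarrow> bool" where
  "is_automorphism L a \<longleftrightarrow> bij_betw a (Mor L) (Mor L) \<and>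
     (\<forall>l\<in>Mor L. dg L (a l) = dg L l \<and> rg L (a l) = a (rg L l) \<and> sr L (a l) = a (sr L l)) \<and>
     (\<forall>l\<in>Mor L. \<forall>m\<in>Mor L. sr L l = rg L m \<longrightarrow> a (cp L l m) = cp L (a l) (a m))"

text \<open>Infinite paths: degree-preserving functors Omega_2 \<rightarrow> Lambda; x m n is the
image of the morphism (m,n) of Omega_2 (m \<le> n); values off the domain are undefined.\<close>
type_synonym 'a ipath = "nat \<times> nat \<Rightarrow> nat \<times> nat \<Rightarrow> 'a"

definition inf_paths :: "'a two_graph \<Rightarrow> 'a ipath set" where
  "inf_paths L = {x.
     (\<forall>m n. m \<le> n \<longrightarrow> x m n \<in> Mor L \<and> dg L (x m n) = n - m) \<and>
     (\<forall>m n p. m \<le> n \<and> n \<le> p \<longrightarrow> sr L (x m n) = rg L (x n p) \<and> x m p = cp L (x m n) (x n p)) \<and>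
     (\<forall>m n. \<not> m \<le> n \<longrightarrow> x m n = undefined)}"

definition shift :: "nat \<times> nat \<Rightarrow> 'a ipath \<Rightarrow> 'a ipath" where
  "shift p x = (\<lambda>m n. x (m + p) (n + p))"

definition prange :: "'a ipath \<Rightarrow> 'a" where
  "prange x = x 0 0"

definition pconcat :: "'a two_graph \<Rightarrow> 'a \<Rightarrow> 'a ipath \<Rightarrow> 'a ipath" where
  "pconcat L l z = (THE y. y \<in> inf_paths L \<and> y 0 (dg L l) = l \<and> shift (dg L l) y = z)"

definition cyl :: "'a two_graph \<Rightarrow> 'a \<Rightarrow> 'a ipath set" where
  "cyl L l = {pconcat L l z | z. z \<in> inf_paths L \<and> prange z = sr L l}"

definition path_top :: "'a two_graph \<Rightarrow> 'a ipath topology" where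
  "path_top L = topology_generated_by {cyl L l | l. l \<in> Mor L}"

definition toZ :: "nat \<times> nat \<Rightarrow> int \<times> int" where
  "toZ p = (int (fst p), int (snd p))"

definition path_groupoid :: "'a two_graph \<Rightarrow> ('a ipath \<times> (int \<times> int) \<times> 'a ipath) set" where
  "path_groupoid L = {(x, k, y). x \<in> inf_paths L \<and> y \<in> inf_paths L \<and>
     (\<exists>l m. shift l x = shift m y \<and> k = toZ l - toZ m)}"

definition gcyl :: "'a two_graph \<Rightarrow> 'a \<Rightarrow> 'a \<Rightarrow> ('a ipath \<times> (int \<times> int) \<times> 'a ipath) set" where
  "gcyl L l m = {(pconcat L l z, toZ (dg L l) - toZ (dg L m), pconcat L m z) | z.
                  z \<in> inf_paths L \<and> prange z = sr L l}"

definition groupoid_top :: "'a two_graph \<Rightarrow> ('a ipath \<times> (int \<times> int) \<times> 'a ipath) topology" where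
  "groupoid_top L = topology_generated_by {gcyl L l m | l m. l \<in> Mor L \<and> m \<in> Mor L \<and> sr L l = sr L m}"

definition gmult :: "('a ipath \<times> (int \<times> int) \<times> 'a ipath) \<Rightarrow> ('a ipath \<times> (int \<times> int) \<times> 'a ipath) \<Rightarrow> ('a ipath \<times> (int \<times> int) \<times> 'a ipath)" where
  "gmult g h = (fst g, fst (snd g) + fst (snd h), snd (snd h))"

definition ginv :: "('a ipath \<times> (int \<times> int) \<times> 'a ipath) \<Rightarrow> ('a ipath \<times> (int \<times> int) \<times> 'a ipath)" where
  "ginv g = (snd (snd g), - fst (snd g), fst g)"

definition composable :: "('a ipath \<times> (int \<times> int) \<times> 'a ipath) \<Rightarrow> ('a ipath \<times> (int \<times> int) \<times> 'a ipath) \<Rightarrow> bool" where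
  "composable g h \<longleftrightarrow> snd (snd g) = fst h"

definition top_groupoid_aut :: "'a two_graph \<Rightarrow> (('a ipath \<times> (int \<times> int) \<times> 'a ipath) \<Rightarrow> ('a ipath \<times> (int \<times> int) \<times> 'a ipath)) \<Rightarrow> bool" where
  "top_groupoid_aut L phi \<longleftrightarrow>
     bij_betw phi (path_groupoid L) (path_groupoid L) \<and>
     (\<forall>g\<in>path_groupoid L. \<forall>h\<in>path_groupoid L.
        (composable g h \<longleftrightarrow> composable (phi g) (phi h)) \<and>
        (composable g h \<longrightarrow> phi (gmult g h) = gmult (phi g) (phi h))) \<and>
     (\<forall>g\<in>path_groupoid L. phi (ginv g) = ginv (phi g)) \<and>
     homeomorphic_map (groupoid_top L) (groupoid_top L) phi"

definition path_map :: "('a \<Rightarrow> 'a) \<Rightarrow> 'a ipath \<Rightarrow> 'a ipath" where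
  "path_map a x = (\<lambda>m n. if m \<le> n then a (x m n) else undefined)"

definition groupoid_map :: "('a \<Rightarrow> 'a) \<Rightarrow> ('a ipath \<times> (int \<times> int) \<times> 'a ipath) \<Rightarrow> ('a ipath \<times> (int \<times> int) \<times> 'a ipath)" where
  "groupoid_map a g = (path_map a (fst g), fst (snd g), path_map a (snd (snd g)))"

end

theory Submission
  imports Defs
begin

text \<open>
On vertices and blue edges the automorphism is forced: a vertex v \<in> V n goes to the range of the
red path of length m_n starting at v, a blue edge e with r(e) \<in> V n to F^{m_n}(e). These choices are
compatible at sources, because going one level down adds n O_n to the exponent and every blue orbit
length at level n divides O_n. Every morphism factors uniquely as a blue path followed by a red path,
and F transports blue edges across red paths, so the map extends to a degree-preserving functor,
bijective because it is bijective on vertices and on blue edges. Uniqueness holds because blue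
edges determine vertices (there are no sources) and a red path is determined by its source and
length. Composing infinite paths with the automorphism maps cylinder sets onto cylinder sets,
which gives the homeomorphism of the path space and the automorphism of the path groupoid.
\<close>

lemma continuous_map_generated_by_inverse:
  assumes f_maps: "\<And>U. U \<in> S \<Longrightarrow> f ` U \<in> S" and g_maps: "\<And>U. U \<in> S \<Longrightarrow> g ` U \<in> S"
    and gf: "\<And>x. x \<in> \<Union>S \<Longrightarrow> g (f x) = x" and fg: "\<And>x. x \<in> \<Union>S \<Longrightarrow> f (g x) = x"
  shows "continuous_map (topology_generated_by S) (topology_generated_by S) f"
proof (rule continuous_on_generated_topo)
  fix U assume U: "U \<in> S"
  have "f -` U \<inter> \<Union>S = g ` U"
  proof
    show "f -` U \<inter> \<Union>S \<subseteq> g ` U"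
      using gf by (metis IntE image_eqI subsetI vimageE)
    show "g ` U \<subseteq> f -` U \<inter> \<Union>S"
      using g_maps[OF U] fg U by auto
  qed
  then show "openin (topology_generated_by S) (f -` U \<inter> topspace (topology_generated_by S))"
    using g_maps[OF U] by (simp add: topology_generated_by_Basis)
next
  show "f ` topspace (topology_generated_by S) \<subseteq> \<Union>S"
    using f_maps by auto
qed

lemma homeomorphic_map_generated_by:
  assumes "\<And>U. U \<in> S \<Longrightarrow> f ` U \<in> S" "\<And>U. U \<in> S \<Longrightarrow> g ` U \<in> S"
    and "\<And>x. x \<in> \<Union>S \<Longrightarrow> g (f x) = x" "\<And>x. x \<in> \<Union>S \<Longrightarrow> f (g x) = x"
  shows "homeomorphic_map (topology_generated_by S) (topology_generated_by S) f"
proof -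
  have "continuous_map (topology_generated_by S) (topology_generated_by S) f"
    "continuous_map (topology_generated_by S) (topology_generated_by S) g"
    using continuous_map_generated_by_inverse[of S f g] continuous_map_generated_by_inverse[of S g f]
      assms by auto
  then show ?thesis
    unfolding homeomorphic_map_maps homeomorphic_maps_def using assms(3,4) by auto
qed

lemma funpow_commute: "(f ^^ a) ((f ^^ b) x) = (f ^^ b) ((f ^^ a) x)"
  by (metis add.commute comp_apply funpow_add)

lemma nat_pair_add_diff_inverse [simp]: "(p::nat\<times>nat) \<le> q \<Longrightarrow> p + (q - p) = q"
  by (cases p; cases q) simp
lemma nat_pair_le_add1 [simp]: "(p::nat\<times>nat) \<le> p + q"
  by (cases p; cases q) simp
lemma nat_pair_le_add2 [simp]: "(q::nat\<times>nat) \<le> p + q"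
  by (cases p; cases q) (simp add: less_eq_prod_def)
lemma nat_pair_zero_le [simp]: "(0::nat\<times>nat) \<le> x"
  by (cases x) (simp add: less_eq_prod_def zero_prod_def)
lemma nat_pair_diff_mono: "(a::nat\<times>nat) \<le> b \<Longrightarrow> b \<le> e \<Longrightarrow> b - a \<le> e - a"
  by (cases a; cases b; cases e) (auto simp: less_eq_prod_def)
lemma nat_pair_diff_diff: "(a::nat\<times>nat) \<le> b \<Longrightarrow> b \<le> e \<Longrightarrow> e - a - (b - a) = e - b"
  by (cases a; cases b; cases e) (auto simp: less_eq_prod_def)
lemma nat_pair_add_diffs: "(a::nat\<times>nat) \<le> b \<Longrightarrow> b \<le> e \<Longrightarrow> a + ((b - a) + (e - b)) = e"
  by (cases a; cases b; cases e) (auto simp: less_eq_prod_def)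
lemma nat_pair_add_le_add_iff [simp]:
  "(i::nat\<times>nat) + D \<le> j + D \<longleftrightarrow> i \<le> j" "(D::nat\<times>nat) + i \<le> D + j \<longleftrightarrow> i \<le> j"
  by (cases i; cases j; cases D; auto simp: less_eq_prod_def)+
lemma nat_pair_add_diff_add [simp]:
  "(D::nat\<times>nat) + j - (D + i) = j - i" "(j::nat\<times>nat) + D - (i + D) = j - i"
  by (cases i; cases j; cases D; simp)+
lemma nat_pair_fst_zero_add:
  "(a::nat\<times>nat) + b = x \<Longrightarrow> fst x = 0 \<Longrightarrow> fst a = 0 \<and> fst b = 0"
  by (cases a; cases b) auto

lemma nat_pair_red_le: "fst (x::nat\<times>nat) = 0 \<Longrightarrow> x \<noteq> 0 \<Longrightarrow> (0,1) \<le> x \<and> x - (x - (0,1)) = (0,1)"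
  by (cases x) (auto simp: less_eq_prod_def zero_prod_def)

locale rank2_graph =
  fixes L :: "'a two_graph"
  assumes is_2graph: "is_2graph L"
begin

abbreviation "M \<equiv> Mor L"
abbreviation "r \<equiv> rg L"
abbreviation "s \<equiv> sr L"
abbreviation "c \<equiv> cp L"
abbreviation "d \<equiv> dg L"

lemma ident_simps [simp]:
  assumes "l \<in> M"
  shows "r l \<in> M" "s l \<in> M" "r (r l) = r l" "s (r l) = r l" "r (s l) = s l" "s (s l) = s l"
    "c (r l) l = l" "c l (s l) = l"
  using is_2graph assms unfolding is_2graph_def by auto

lemma comp_simps [simp]:
  assumes "l \<in> M" "m \<in> M" "s l = r m"
  shows "c l m \<in> M" "r (c l m) = r l" "s (c l m) = s m" "d (c l m) = d l + d m"
  using is_2graph assms unfolding is_2graph_def by auto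

lemma comp_assoc:
  assumes "l \<in> M" "m \<in> M" "n \<in> M" "s l = r m" "s m = r n"
  shows "c (c l m) n = c l (c m n)"
  using is_2graph assms unfolding is_2graph_def by blast

lemma factorisation_ex1:
  assumes "l \<in> M" "d l = p + q"
  shows "\<exists>!mn. fst mn \<in> M \<and> snd mn \<in> M \<and> d (fst mn) = p \<and> d (snd mn) = q \<and>
               s (fst mn) = r (snd mn) \<and> c (fst mn) (snd mn) = l"
  using is_2graph assms unfolding is_2graph_def by blast

lemma factorisation_unique:
  assumes "a \<in> M" "b \<in> M" "a' \<in> M" "b' \<in> M" "s a = r b" "s a' = r b'"
    and "c a b = c a' b'" "d a = d a'"
  shows "a = a' \<and> b = b'"
proof -
  have "d a + d b = d a + d b'"
    using comp_simps(4)[of a b] comp_simps(4)[of a' b'] assms by metis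
  then have "d b = d b'"
    by (rule add_left_imp_eq)
  obtain u where u: "\<And>mn. fst mn \<in> M \<and> snd mn \<in> M \<and> d (fst mn) = d a \<and> d (snd mn) = d b \<and>
               s (fst mn) = r (snd mn) \<and> c (fst mn) (snd mn) = c a b \<Longrightarrow> mn = u"
    using factorisation_ex1[of "c a b" "d a" "d b"] assms by (metis comp_simps(1,4))
  have "(a, b) = u" "(a', b') = u"
    using u[of "(a, b)"] u[of "(a', b')"] assms \<open>d b = d b'\<close> by auto
  then show ?thesis
    by auto
qed

lemma deg_range [simp]: "l \<in> M \<Longrightarrow> d (r l) = 0"
  using comp_simps(4)[of "r l" l] ident_simps[of l] by simp

lemma deg_source [simp]: "l \<in> M \<Longrightarrow> d (s l) = 0"
  using comp_simps(4)[of l "s l"] ident_simps[of l] by simp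

lemma deg_zero_ident:
  assumes "l \<in> M" "d l = 0"
  shows "r l = l" "s l = l"
  using factorisation_unique[of "r l" l l "s l"] assms by simp_all

text \<open>The factorisation l = pre l p \<cdot> suf l p with d (pre l p) = p; in the paper's notation
  pre l p = l(0,p) and suf l p = l(p, d l).\<close>

definition pre :: "'a \<Rightarrow> nat \<times> nat \<Rightarrow> 'a" where
  "pre l p = fst (THE mn. fst mn \<in> M \<and> snd mn \<in> M \<and> d (fst mn) = p \<and> d (snd mn) = d l - p \<and>
               s (fst mn) = r (snd mn) \<and> c (fst mn) (snd mn) = l)"

definition suf :: "'a \<Rightarrow> nat \<times> nat \<Rightarrow> 'a" where
  "suf l p = snd (THE mn. fst mn \<in> M \<and> snd mn \<in> M \<and> d (fst mn) = p \<and> d (snd mn) = d l - p \<and>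
               s (fst mn) = r (snd mn) \<and> c (fst mn) (snd mn) = l)"

lemma pre_suf:
  assumes "l \<in> M" "p \<le> d l"
  shows "pre l p \<in> M" "suf l p \<in> M" "d (pre l p) = p" "d (suf l p) = d l - p"
    "s (pre l p) = r (suf l p)" "c (pre l p) (suf l p) = l"
proof -
  have "d l = p + (d l - p)"
    using assms by simp
  from theI'[OF factorisation_ex1[OF assms(1) this]]
  show "pre l p \<in> M" "suf l p \<in> M" "d (pre l p) = p" "d (suf l p) = d l - p"
    "s (pre l p) = r (suf l p)" "c (pre l p) (suf l p) = l"
    unfolding pre_def suf_def by auto
qed

lemma range_pre: "l \<in> M \<Longrightarrow> p \<le> d l \<Longrightarrow> r (pre l p) = r l"
  using pre_suf[of l p] comp_simps(2)[of "pre l p" "suf l p"] by metis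

lemma source_suf: "l \<in> M \<Longrightarrow> p \<le> d l \<Longrightarrow> s (suf l p) = s l"
  using pre_suf[of l p] comp_simps(3)[of "pre l p" "suf l p"] by metis

lemma pre_suf_comp:
  assumes "a \<in> M" "b \<in> M" "s a = r b"
  shows "pre (c a b) (d a) = a" "suf (c a b) (d a) = b"
proof -
  have "d a \<le> d (c a b)"
    using assms by simp
  note split = pre_suf[OF comp_simps(1)[OF assms] this]
  have "pre (c a b) (d a) = a \<and> suf (c a b) (d a) = b"
    using factorisation_unique[of "pre (c a b) (d a)" "suf (c a b) (d a)" a b] split assms by auto
  then show "pre (c a b) (d a) = a" "suf (c a b) (d a) = b"
    by auto
qed

lemma comp_cancel_left:
  assumes "a \<in> M" "b \<in> M" "b' \<in> M" "s a = r b" "s a = r b'" "c a b = c a b'"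
  shows "b = b'"
  using factorisation_unique[of a b a b'] assms by auto

definition seg :: "'a \<Rightarrow> nat \<times> nat \<Rightarrow> nat \<times> nat \<Rightarrow> 'a" where
  "seg X a b = pre (suf X a) (b - a)"

lemma seg_middle:
  assumes "A \<in> M" "C \<in> M" "B \<in> M" "s A = r C" "s C = r B"
  shows "seg (c A (c C B)) (d A) (d A + d C) = C"
proof -
  have "suf (c A (c C B)) (d A) = c C B"
    using pre_suf_comp(2)[of A "c C B"] assms by simp
  then show ?thesis
    unfolding seg_def using pre_suf_comp(1)[of C B] assms by simp
qed

lemma seg_decomp:
  assumes "X \<in> M" "a \<le> b" "b \<le> d X"
  shows "seg X a b \<in> M" "d (seg X a b) = b - a"
    "pre X a \<in> M" "suf (suf X a) (b - a) \<in> M" "s (pre X a) = r (seg X a b)"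
    "s (seg X a b) = r (suf (suf X a) (b - a))"
    "X = c (pre X a) (c (seg X a b) (suf (suf X a) (b - a)))"
    "d (pre X a) = a" "d (suf (suf X a) (b - a)) = d X - b"
proof -
  have "a \<le> d X"
    using assms order_trans by blast
  note S1 = pre_suf[OF assms(1) this]
  have le: "b - a \<le> d (suf X a)"
    using S1(4) nat_pair_diff_mono assms by simp
  note S2 = pre_suf[OF S1(2) le]
  show "seg X a b \<in> M" "d (seg X a b) = b - a" "pre X a \<in> M" "suf (suf X a) (b - a) \<in> M"
    "s (seg X a b) = r (suf (suf X a) (b - a))" "d (pre X a) = a"
    "X = c (pre X a) (c (seg X a b) (suf (suf X a) (b - a)))"
    unfolding seg_def using S1 S2 by auto
  show "d (suf (suf X a) (b - a)) = d X - b"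
    using S1 S2 nat_pair_diff_diff assms by simp
  show "s (pre X a) = r (seg X a b)"
    unfolding seg_def using S1 S2 range_pre[OF S1(2) le] by simp
qed

lemma seg_comp:
  assumes "X \<in> M" "a \<le> b" "b \<le> e" "e \<le> d X"
  shows "seg X a e = c (seg X a b) (seg X b e)" "s (seg X a b) = r (seg X b e)"
proof -
  have "b \<le> d X"
    using assms order_trans by blast
  note B = seg_decomp[OF assms(1,2) this]
  define A where "A = pre X a"
  define C1 where "C1 = seg X a b"
  define Z where "Z = suf (suf X a) (b - a)"
  have "e - b \<le> d Z"
    unfolding Z_def using B nat_pair_diff_mono assms by simp
  note SZ = pre_suf[OF B(4)[folded Z_def] this] range_pre[OF B(4)[folded Z_def] this]
  define C2 where "C2 = pre Z (e - b)"
  define T where "T = suf Z (e - b)"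
  have mem: "A \<in> M" "C1 \<in> M" "C2 \<in> M" "T \<in> M"
    and cs: "s A = r C1" "s C1 = r C2" "s C2 = r T"
    and deg: "d A = a" "d C1 = b - a" "d C2 = e - b"
    and X: "X = c A (c C1 (c C2 T))"
    using B SZ unfolding A_def C1_def C2_def T_def Z_def by auto
  have "X = c (c A C1) (c C2 T)"
    using X comp_assoc mem cs by simp
  then have s2: "seg X b e = C2"
    using seg_middle[of "c A C1" C2 T] mem cs deg assms nat_pair_add_diffs[of a b e] by simp
  have "X = c A (c (c C1 C2) T)"
    using X comp_assoc mem cs by simp
  then have s3: "seg X a e = c C1 C2"
    using seg_middle[of A "c C1 C2" T] mem cs deg nat_pair_add_diffs[OF assms(2,3)] by simp
  show "seg X a e = c (seg X a b) (seg X b e)" "s (seg X a b) = r (seg X b e)"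
    using s2 s3 cs C1_def by simp_all
qed

lemma seg_comp_left:
  assumes "X \<in> M" "Y \<in> M" "s X = r Y" "a \<le> b" "b \<le> d X"
  shows "seg (c X Y) a b = seg X a b"
proof -
  note B = seg_decomp[OF assms(1,4,5)]
  let ?A = "pre X a" and ?C = "seg X a b" and ?B = "suf (suf X a) (b - a)"
  have sB: "s ?B = r Y"
    using assms B comp_simps(3)[of ?C ?B] comp_simps(3)[of ?A "c ?C ?B"] by simp
  have "c X Y = c (c ?A (c ?C ?B)) Y"
    using B(7) by simp
  also have "\<dots> = c ?A (c ?C (c ?B Y))"
    using comp_assoc[of ?A "c ?C ?B" Y] comp_assoc[of ?C ?B Y] B sB assms by simp
  finally show ?thesis
    using seg_middle[of ?A ?C "c ?B Y"] B sB assms by simp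
qed

lemma seg_comp_right:
  assumes "X \<in> M" "Y \<in> M" "s X = r Y" "a \<le> b" "b \<le> d Y"
  shows "seg (c X Y) (d X + a) (d X + b) = seg Y a b"
proof -
  note B = seg_decomp[OF assms(2,4,5)]
  let ?A = "pre Y a" and ?C = "seg Y a b" and ?B = "suf (suf Y a) (b - a)"
  have "a \<le> d Y"
    using assms order_trans by blast
  then have rA: "r ?A = r Y"
    using range_pre[OF assms(2)] by blast
  have "c X Y = c (c X ?A) (c ?C ?B)"
    using B(7) comp_assoc[of X ?A "c ?C ?B"] B rA assms by simp
  moreover have "d (c X ?A) = d X + a"
    using B assms rA by simp
  ultimately show ?thesis
    using seg_middle[of "c X ?A" ?C ?B] B assms rA by (simp add: add.assoc)
qed

lemma seg_all: "X \<in> M \<Longrightarrow> seg X 0 (d X) = X"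
  using seg_middle[of "r X" X "s X"] by simp

lemma cycle_factor_nonzero_head:
  assumes "is_cycle L l" "lies_on L v l"
  obtains k1 k2 where "factors L l k1 k2" "s k1 = v" "d k1 \<noteq> 0"
proof -
  have l: "l \<in> M" "d l \<noteq> 0" "r l = s l"
    using assms(1) unfolding is_cycle_def by auto
  obtain l1 l2 where f: "factors L l l1 l2" "s l1 = v"
    using assms(2) unfolding lies_on_def by blast
  show ?thesis
  proof (cases "d l1 = 0")
    case True
    then have "r l = v"
      using f deg_zero_ident[of l1] comp_simps(2)[of l1 l2] unfolding factors_def by auto
    moreover have "factors L l l (s l)"
      unfolding factors_def using l by simp
    ultimately show ?thesis
      using that l by metis
  next
    case False
    then show ?thesis
      using that f by blast
  qed
qed

lemma cycle_factor_nonzero_tail: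
  assumes "is_cycle L l" "lies_on L v l"
  obtains k1 k2 where "factors L l k1 k2" "s k1 = v" "d k2 \<noteq> 0"
proof -
  have l: "l \<in> M" "d l \<noteq> 0" "r l = s l"
    using assms(1) unfolding is_cycle_def by auto
  obtain l1 l2 where f: "factors L l l1 l2" "s l1 = v"
    using assms(2) unfolding lies_on_def by blast
  show ?thesis
  proof (cases "d l2 = 0")
    case True
    then have "l1 = l"
      using f deg_zero_ident[of l2] unfolding factors_def by auto
    then show ?thesis
      using that[of "r l" l] f l unfolding factors_def by simp
  next
    case False
    then show ?thesis
      using that f by blast
  qed
qed

section \<open>Infinite paths\<close>

lemma inf_pathsD:
  assumes "x \<in> inf_paths L"
  shows "\<And>m n. m \<le> n \<Longrightarrow> x m n \<in> M" "\<And>m n. m \<le> n \<Longrightarrow> d (x m n) = n - m"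
    "\<And>m n p. m \<le> n \<Longrightarrow> n \<le> p \<Longrightarrow> s (x m n) = r (x n p)"
    "\<And>m n p. m \<le> n \<Longrightarrow> n \<le> p \<Longrightarrow> x m p = c (x m n) (x n p)"
    "\<And>m n. \<not> m \<le> n \<Longrightarrow> x m n = undefined"
  using assms unfolding inf_paths_def by auto

lemma inf_path_seg:
  assumes x: "x \<in> inf_paths L" and "m \<le> n" "n \<le> N"
  shows "x m n = seg (x 0 N) m n"
proof -
  have "m \<le> N"
    using assms order_trans by blast
  then have "x 0 N = c (x 0 m) (c (x m n) (x n N))"
    using inf_pathsD(4)[OF x, of 0 m N] inf_pathsD(4)[OF x, of m n N] assms by simp
  moreover have "x 0 m \<in> M" "x m n \<in> M" "x n N \<in> M"
    "s (x 0 m) = r (x m n)" "s (x m n) = r (x n N)"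
    using inf_pathsD(1,3)[OF x] assms \<open>m \<le> N\<close> by auto
  moreover have "d (x 0 m) = m" "d (x m n) = n - m"
    using inf_pathsD(2)[OF x] assms by auto
  ultimately show ?thesis
    using seg_middle[of "x 0 m" "x m n" "x n N"] assms by simp
qed

lemma inf_path_range:
  assumes x: "x \<in> inf_paths L"
  shows "r (x 0 n) = x 0 0"
proof -
  have "x 0 0 \<in> M" "x 0 n \<in> M" "s (x 0 0) = r (x 0 n)" "x 0 n = c (x 0 0) (x 0 n)"
    using inf_pathsD(1)[OF x, of 0 0] inf_pathsD(1)[OF x, of 0 n] inf_pathsD(3,4)[OF x, of 0 0 n]
    by auto
  moreover have "r (x 0 0) = x 0 0"
    using deg_zero_ident(1) inf_pathsD(1,2)[OF x, of 0 0] by simp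
  ultimately show ?thesis
    using comp_simps(2) by metis
qed

lemma inf_path_eqI:
  assumes y: "y \<in> inf_paths L" and y': "y' \<in> inf_paths L"
    and "y 0 D = y' 0 D" and shift_eq: "shift D y = shift D y'"
  shows "y = y'"
proof (intro ext)
  fix m n :: "nat \<times> nat"
  show "y m n = y' m n"
  proof (cases "m \<le> n")
    case False
    then show ?thesis
      using inf_pathsD(5) y y' by metis
  next
    case True
    define N where "N = sup n D"
    have N: "n \<le> N" "D \<le> N"
      unfolding N_def by auto
    have "shift D y 0 (N - D) = shift D y' 0 (N - D)"
      using shift_eq by simp
    then have "y D N = y' D N"
      using N unfolding shift_def by (simp add: add.commute)
    then have "y 0 N = y' 0 N"
      using inf_pathsD(4)[OF y, of 0 D N] inf_pathsD(4)[OF y', of 0 D N] N assms by simp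
    then show ?thesis
      using inf_path_seg[OF y True N(1)] inf_path_seg[OF y' True N(1)] by simp
  qed
qed

definition concat_path :: "'a \<Rightarrow> 'a ipath \<Rightarrow> 'a ipath" where
  "concat_path l z = (\<lambda>m n. if m \<le> n then seg (c l (z 0 n)) m n else undefined)"

context
  fixes l z
  assumes l: "l \<in> M" and z: "z \<in> inf_paths L" and range_z: "z 0 0 = s l"
begin

private lemma concat_facts:
  shows "c l (z 0 n) \<in> M" "d (c l (z 0 n)) = d l + n" "r (z 0 n) = s l"
  using inf_path_range[OF z] inf_pathsD(1,2)[OF z, of 0 n] l range_z by auto

lemma concat_seg_stable:
  assumes "n \<le> n'" "a \<le> b" "b \<le> d l + n"
  shows "seg (c l (z 0 n')) a b = seg (c l (z 0 n)) a b"
proof -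
  have z3: "z 0 n \<in> M" "z n n' \<in> M" "s (z 0 n) = r (z n n')" "z 0 n' = c (z 0 n) (z n n')"
    using inf_pathsD(1)[OF z, of 0 n] inf_pathsD(1)[OF z, of n n'] inf_pathsD(3,4)[OF z, of 0 n n']
      assms by auto
  then have "c l (z 0 n') = c (c l (z 0 n)) (z n n')"
    using comp_assoc[of l "z 0 n" "z n n'"] l concat_facts(3)[of n] by simp
  moreover have "s (c l (z 0 n)) = r (z n n')"
    using z3 l concat_facts(3)[of n] by simp
  ultimately show ?thesis
    using seg_comp_left[of "c l (z 0 n)" "z n n'" a b] concat_facts(1,2)[of n] z3(2) assms by simp
qed

lemma concat_path_in_inf_paths: "concat_path l z \<in> inf_paths L"
  unfolding inf_paths_def mem_Collect_eq
proof (intro conjI allI impI)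
  fix m n :: "nat \<times> nat" assume "m \<le> n"
  then show "concat_path l z m n \<in> M" "d (concat_path l z m n) = n - m"
    unfolding concat_path_def using seg_decomp[OF concat_facts(1), of m n n] concat_facts by auto
next
  fix m n p :: "nat \<times> nat" assume mnp: "m \<le> n \<and> n \<le> p"
  then have "concat_path l z m n = seg (c l (z 0 p)) m n"
    unfolding concat_path_def using concat_seg_stable[of n p m n] by simp
  moreover have "concat_path l z n p = seg (c l (z 0 p)) n p"
    "concat_path l z m p = seg (c l (z 0 p)) m p"
    unfolding concat_path_def using mnp by auto
  ultimately show "s (concat_path l z m n) = r (concat_path l z n p)"
    "concat_path l z m p = c (concat_path l z m n) (concat_path l z n p)"
    using seg_comp[OF concat_facts(1), of m n p] mnp concat_facts by auto
next
  fix m n :: "nat \<times> nat" assume "\<not> m \<le> n"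
  then show "concat_path l z m n = undefined"
    unfolding concat_path_def by simp
qed

lemma concat_path_head: "concat_path l z 0 (d l) = l"
  unfolding concat_path_def
  using seg_comp_left[of l "z 0 (d l)" 0 "d l"] seg_all l concat_facts inf_pathsD(1)[OF z] by simp

lemma concat_path_shift: "shift (d l) (concat_path l z) = z"
proof (intro ext)
  fix i j :: "nat \<times> nat"
  show "shift (d l) (concat_path l z) i j = z i j"
  proof (cases "i \<le> j")
    case False
    then show ?thesis
      unfolding shift_def concat_path_def using inf_pathsD(5)[OF z] by simp
  next
    case True
    have "shift (d l) (concat_path l z) i j = seg (c l (z 0 (j + d l))) (i + d l) (j + d l)"
      unfolding shift_def concat_path_def using True by simp
    also have "\<dots> = seg (c l (z 0 j)) (d l + i) (d l + j)"
      using concat_seg_stable[of j "j + d l" "i + d l" "j + d l"] True by (simp add: add.commute)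
    also have "\<dots> = seg (z 0 j) i j"
      using seg_comp_right[of l "z 0 j" i j] l concat_facts inf_pathsD(1,2)[OF z] True by simp
    also have "\<dots> = z i j"
      using inf_path_seg[OF z True order_refl] by simp
    finally show ?thesis .
  qed
qed

lemma pconcat_eq_concat_path: "pconcat L l z = concat_path l z"
  unfolding pconcat_def
proof (rule the_equality)
  show "concat_path l z \<in> inf_paths L \<and> concat_path l z 0 (d l) = l \<and>
      shift (d l) (concat_path l z) = z"
    using concat_path_in_inf_paths concat_path_head concat_path_shift by blast
next
  fix y assume "y \<in> inf_paths L \<and> y 0 (d l) = l \<and> shift (d l) y = z"
  then show "y = concat_path l z"
    using inf_path_eqI[of y "concat_path l z" "d l"] concat_path_in_inf_paths
      concat_path_head concat_path_shift by auto
qed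

lemma pconcat:
  shows "pconcat L l z \<in> inf_paths L" "pconcat L l z 0 (d l) = l" "shift (d l) (pconcat L l z) = z"
  using pconcat_eq_concat_path concat_path_in_inf_paths concat_path_head concat_path_shift by simp_all

lemma pconcat_eqI:
  assumes "y \<in> inf_paths L" "y 0 (d l) = l" "shift (d l) y = z"
  shows "pconcat L l z = y"
  using inf_path_eqI[of "pconcat L l z" y "d l"] pconcat assms by simp

end

section \<open>Automorphisms acting on paths and on the path groupoid\<close>

lemma is_automorphismD:
  assumes "is_automorphism L a"
  shows "\<And>l. l \<in> M \<Longrightarrow> a l \<in> M" "\<And>l. l \<in> M \<Longrightarrow> d (a l) = d l"
    "\<And>l. l \<in> M \<Longrightarrow> r (a l) = a (r l)" "\<And>l. l \<in> M \<Longrightarrow> s (a l) = a (s l)"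
    "\<And>l m. l \<in> M \<Longrightarrow> m \<in> M \<Longrightarrow> s l = r m \<Longrightarrow> a (c l m) = c (a l) (a m)"
    "inj_on a M" "a ` M = M"
  using assms unfolding is_automorphism_def bij_betw_def by auto

lemma automorphism_inv:
  assumes a: "is_automorphism L a"
  shows "is_automorphism L (inv_into M a)"
    "\<And>l. l \<in> M \<Longrightarrow> inv_into M a (a l) = l" "\<And>l. l \<in> M \<Longrightarrow> a (inv_into M a l) = l"
proof -
  note A = is_automorphismD[OF a]
  let ?b = "inv_into M a"
  show ba: "\<And>l. l \<in> M \<Longrightarrow> ?b (a l) = l"
    using inv_into_f_f A(6) by metis
  show ab: "\<And>l. l \<in> M \<Longrightarrow> a (?b l) = l"
    using f_inv_into_f A(7) by metis
  have bM: "\<And>l. l \<in> M \<Longrightarrow> ?b l \<in> M"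
    using inv_into_into A(7) by metis
  show "is_automorphism L ?b"
    unfolding is_automorphism_def
  proof (intro conjI ballI impI)
    show "bij_betw ?b M M"
      using bij_betw_inv_into A(6,7) unfolding bij_betw_def by blast
  next
    fix l assume l: "l \<in> M"
    show "d (?b l) = d l"
      using A(2)[OF bM[OF l]] ab l by simp
    show "r (?b l) = ?b (r l)" "s (?b l) = ?b (s l)"
      using A(3,4)[OF bM[OF l]] ab[OF l] ba ident_simps(1,2) bM l by metis+
  next
    fix l m assume lm: "l \<in> M" "m \<in> M" "s l = r m"
    have "a (s (?b l)) = a (r (?b m))"
      using A(4)[OF bM[OF lm(1)]] A(3)[OF bM[OF lm(2)]] ab[OF lm(1)] ab[OF lm(2)] lm(3) by simp
    then have sr: "s (?b l) = r (?b m)"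
      using A(6) bM lm unfolding inj_on_def by (meson ident_simps(1,2))
    have "a (c (?b l) (?b m)) = c l m"
      using A(5)[OF bM[OF lm(1)] bM[OF lm(2)] sr] ab lm by simp
    then show "?b (c l m) = c (?b l) (?b m)"
      using ba[of "c (?b l) (?b m)"] bM lm sr by simp
  qed
qed

context
  fixes a
  assumes a: "is_automorphism L a"
begin

lemma path_map:
  assumes x: "x \<in> inf_paths L"
  shows "path_map a x \<in> inf_paths L" "path_map a x 0 0 = a (x 0 0)"
    "\<And>m n. m \<le> n \<Longrightarrow> path_map a x m n = a (x m n)"
proof -
  note A = is_automorphismD[OF a]
  show "\<And>m n. m \<le> n \<Longrightarrow> path_map a x m n = a (x m n)" "path_map a x 0 0 = a (x 0 0)"
    unfolding path_map_def by simp_all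
  show "path_map a x \<in> inf_paths L"
    unfolding inf_paths_def mem_Collect_eq
  proof (intro conjI allI impI)
    fix m n :: "nat \<times> nat" assume mn: "m \<le> n"
    then show "path_map a x m n \<in> M" "d (path_map a x m n) = n - m"
      unfolding path_map_def using A(1,2) inf_pathsD(1,2)[OF x] by simp_all
  next
    fix m n p :: "nat \<times> nat" assume mnp: "m \<le> n \<and> n \<le> p"
    then have "path_map a x m n = a (x m n)" "path_map a x n p = a (x n p)"
      "path_map a x m p = a (x m p)"
      unfolding path_map_def by auto
    moreover have "x m n \<in> M" "x n p \<in> M" "s (x m n) = r (x n p)" "x m p = c (x m n) (x n p)"
      using inf_pathsD(1)[OF x] inf_pathsD(3,4)[OF x, of m n p] mnp by auto
    ultimately show "s (path_map a x m n) = r (path_map a x n p)"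
      "path_map a x m p = c (path_map a x m n) (path_map a x n p)"
      using A(3,4,5) by simp_all
  next
    fix m n :: "nat \<times> nat" assume "\<not> m \<le> n"
    then show "path_map a x m n = undefined"
      unfolding path_map_def by simp
  qed
qed

lemma shift_path_map: "shift p (path_map a x) = path_map a (shift p x)"
  unfolding shift_def path_map_def by auto

lemma path_map_inv:
  assumes x: "x \<in> inf_paths L"
  shows "path_map (inv_into M a) (path_map a x) = x" "path_map a (path_map (inv_into M a) x) = x"
  unfolding path_map_def using inf_pathsD(1,5)[OF x] automorphism_inv(2,3)[OF a]
  by (intro ext; auto)+

lemma path_map_image: "path_map a ` inf_paths L = inf_paths L"
proof
  show "path_map a ` inf_paths L \<subseteq> inf_paths L"
    using path_map(1) by blast
  show "inf_paths L \<subseteq> path_map a ` inf_paths L"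
  proof
    fix y assume y: "y \<in> inf_paths L"
    then have "path_map (inv_into M a) y \<in> inf_paths L"
      using rank2_graph.path_map(1)[OF _ automorphism_inv(1)[OF a]] rank2_graph_axioms by blast
    then show "y \<in> path_map a ` inf_paths L"
      using path_map_inv(2)[OF y] by force
  qed
qed

lemma path_map_pconcat:
  assumes l: "l \<in> M" and z: "z \<in> inf_paths L" and range_z: "z 0 0 = s l"
  shows "path_map a (pconcat L l z) = pconcat L (a l) (path_map a z)"
proof -
  note A = is_automorphismD[OF a] and P = pconcat[OF l z range_z]
  have "pconcat L (a l) (path_map a z) = path_map a (pconcat L l z)"
  proof (rule pconcat_eqI)
    show "a l \<in> M" "path_map a z \<in> inf_paths L" "path_map a z 0 0 = s (a l)"
      "path_map a (pconcat L l z) \<in> inf_paths L"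
      using A l path_map[OF z] range_z path_map(1)[OF P(1)] by simp_all
    show "path_map a (pconcat L l z) 0 (d (a l)) = a l"
      "shift (d (a l)) (path_map a (pconcat L l z)) = path_map a z"
      using path_map(3)[OF P(1), of 0 "d l"] shift_path_map P A l by simp_all
  qed
  then show ?thesis
    by simp
qed

lemma path_map_cyl:
  assumes l: "l \<in> M"
  shows "path_map a ` cyl L l = cyl L (a l)"
proof
  note A = is_automorphismD[OF a]
  show "path_map a ` cyl L l \<subseteq> cyl L (a l)"
  proof
    fix y assume "y \<in> path_map a ` cyl L l"
    then obtain z where z: "z \<in> inf_paths L" "z 0 0 = s l" "y = path_map a (pconcat L l z)"
      unfolding cyl_def prange_def by auto
    then have "y = pconcat L (a l) (path_map a z)"
      using path_map_pconcat[OF l] by simp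
    moreover have "path_map a z \<in> inf_paths L" "path_map a z 0 0 = s (a l)"
      using path_map[OF z(1)] z A l by auto
    ultimately show "y \<in> cyl L (a l)"
      unfolding cyl_def prange_def by blast
  qed
  show "cyl L (a l) \<subseteq> path_map a ` cyl L l"
  proof
    fix y assume "y \<in> cyl L (a l)"
    then obtain z' where z': "z' \<in> inf_paths L" "z' 0 0 = s (a l)" "y = pconcat L (a l) z'"
      unfolding cyl_def prange_def by auto
    define z where "z = path_map (inv_into M a) z'"
    have z: "z \<in> inf_paths L" "z 0 0 = s l" "path_map a z = z'"
      using rank2_graph.path_map[OF rank2_graph_axioms automorphism_inv(1)[OF a] z'(1)]
        automorphism_inv(2)[OF a] z' A l path_map_inv(2)[OF z'(1)] unfolding z_def by auto
    then have "y = path_map a (pconcat L l z)"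
      using path_map_pconcat[OF l] z' by simp
    moreover have "pconcat L l z \<in> cyl L l"
      using z unfolding cyl_def prange_def by blast
    ultimately show "y \<in> path_map a ` cyl L l"
      by blast
  qed
qed

lemma groupoid_map_gcyl:
  assumes l: "l \<in> M" and m: "m \<in> M" and lm: "s l = s m"
  shows "groupoid_map a ` gcyl L l m = gcyl L (a l) (a m)"
proof
  note A = is_automorphismD[OF a]
  have image: "groupoid_map a (pconcat L l z, toZ (d l) - toZ (d m), pconcat L m z) =
      (pconcat L (a l) (path_map a z), toZ (d (a l)) - toZ (d (a m)), pconcat L (a m) (path_map a z))"
    if "z \<in> inf_paths L" "z 0 0 = s l" for z
    using path_map_pconcat[OF l that] path_map_pconcat[OF m that(1)] that lm A l m
    unfolding groupoid_map_def by simp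
  show "groupoid_map a ` gcyl L l m \<subseteq> gcyl L (a l) (a m)"
  proof
    fix y assume "y \<in> groupoid_map a ` gcyl L l m"
    then obtain z where z: "z \<in> inf_paths L" "z 0 0 = s l"
      "y = groupoid_map a (pconcat L l z, toZ (d l) - toZ (d m), pconcat L m z)"
      unfolding gcyl_def prange_def by auto
    moreover have "path_map a z \<in> inf_paths L" "path_map a z 0 0 = s (a l)"
      using path_map[OF z(1)] z A l by auto
    ultimately show "y \<in> gcyl L (a l) (a m)"
      using image unfolding gcyl_def prange_def by auto
  qed
  show "gcyl L (a l) (a m) \<subseteq> groupoid_map a ` gcyl L l m"
  proof
    fix y assume "y \<in> gcyl L (a l) (a m)"
    then obtain z' where z': "z' \<in> inf_paths L" "z' 0 0 = s (a l)"
      "y = (pconcat L (a l) z', toZ (d (a l)) - toZ (d (a m)), pconcat L (a m) z')"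
      unfolding gcyl_def prange_def by auto
    define z where "z = path_map (inv_into M a) z'"
    have z: "z \<in> inf_paths L" "z 0 0 = s l" "path_map a z = z'"
      using rank2_graph.path_map[OF rank2_graph_axioms automorphism_inv(1)[OF a] z'(1)]
        automorphism_inv(2)[OF a] z' A l path_map_inv(2)[OF z'(1)] unfolding z_def by auto
    then have "y = groupoid_map a (pconcat L l z, toZ (d l) - toZ (d m), pconcat L m z)"
      using image z' by simp
    moreover have "(pconcat L l z, toZ (d l) - toZ (d m), pconcat L m z) \<in> gcyl L l m"
      using z unfolding gcyl_def prange_def by blast
    ultimately show "y \<in> groupoid_map a ` gcyl L l m"
      by blast
  qed
qed

lemma groupoid_map_path_groupoid:
  assumes g: "g \<in> path_groupoid L"
  shows "groupoid_map a g \<in> path_groupoid L"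
proof -
  obtain x k y l m where g': "g = (x, k, y)" and x: "x \<in> inf_paths L" and y: "y \<in> inf_paths L"
    and lm: "shift l x = shift m y" "k = toZ l - toZ m"
    using g unfolding path_groupoid_def by blast
  then have "shift l (path_map a x) = shift m (path_map a y)"
    using shift_path_map by metis
  then have "\<exists>l m. shift l (path_map a x) = shift m (path_map a y) \<and> k = toZ l - toZ m"
    using lm(2) by blast
  then show ?thesis
    unfolding g' groupoid_map_def path_groupoid_def using path_map(1) x y by simp
qed

lemma groupoid_map_inv:
  assumes "fst g \<in> inf_paths L" "snd (snd g) \<in> inf_paths L"
  shows "groupoid_map (inv_into M a) (groupoid_map a g) = g"
    "groupoid_map a (groupoid_map (inv_into M a) g) = g"
  using path_map_inv[OF assms(1)] path_map_inv[OF assms(2)] unfolding groupoid_map_def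
  by (cases g; auto)+

end

lemma cyl_subset: "l \<in> M \<Longrightarrow> cyl L l \<subseteq> inf_paths L"
  unfolding cyl_def prange_def using pconcat by auto

lemma gcyl_subset:
  "g \<in> gcyl L l m \<Longrightarrow> l \<in> M \<Longrightarrow> m \<in> M \<Longrightarrow> s l = s m \<Longrightarrow>
    fst g \<in> inf_paths L \<and> snd (snd g) \<in> inf_paths L"
  unfolding gcyl_def prange_def using pconcat by auto

lemma path_groupoidD: "g \<in> path_groupoid L \<Longrightarrow> fst g \<in> inf_paths L \<and> snd (snd g) \<in> inf_paths L"
  unfolding path_groupoid_def by auto

lemma homeomorphic_path_map:
  assumes a: "is_automorphism L a"
  shows "homeomorphic_map (path_top L) (path_top L) (path_map a)"
  unfolding path_top_def
proof (rule homeomorphic_map_generated_by[where g = "path_map (inv_into M a)"])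
  fix U assume "U \<in> {cyl L l |l. l \<in> M}"
  then obtain l where l: "l \<in> M" "U = cyl L l"
    by blast
  have "path_map b ` U \<in> {cyl L l |l. l \<in> M}" if b: "is_automorphism L b" for b
    using path_map_cyl[OF b l(1)] l(2) is_automorphismD(1)[OF b l(1)] by blast
  then show "path_map a ` U \<in> {cyl L l |l. l \<in> M}"
    "path_map (inv_into M a) ` U \<in> {cyl L l |l. l \<in> M}"
    using a automorphism_inv(1)[OF a] by blast+
next
  fix x assume "x \<in> \<Union>{cyl L l |l. l \<in> M}"
  then have x: "x \<in> inf_paths L"
    using cyl_subset by blast
  show "path_map (inv_into M a) (path_map a x) = x" "path_map a (path_map (inv_into M a) x) = x"
    using path_map_inv[OF a x] by simp_all
qed

lemma homeomorphic_groupoid_map: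
  assumes a: "is_automorphism L a"
  shows "homeomorphic_map (groupoid_top L) (groupoid_top L) (groupoid_map a)"
  unfolding groupoid_top_def
proof (rule homeomorphic_map_generated_by[where g = "groupoid_map (inv_into M a)"])
  fix U assume "U \<in> {gcyl L l m |l m. l \<in> M \<and> m \<in> M \<and> s l = s m}"
  then obtain l m where lm: "l \<in> M" "m \<in> M" "s l = s m" "U = gcyl L l m"
    by blast
  have "groupoid_map b ` U \<in> {gcyl L l m |l m. l \<in> M \<and> m \<in> M \<and> s l = s m}"
    if b: "is_automorphism L b" for b
  proof -
    have "b l \<in> M" "b m \<in> M" "s (b l) = s (b m)"
      using is_automorphismD(1,4)[OF b] lm(1-3) by auto
    then show ?thesis
      using groupoid_map_gcyl[OF b lm(1-3)] lm(4) by blast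
  qed
  then show "groupoid_map a ` U \<in> {gcyl L l m |l m. l \<in> M \<and> m \<in> M \<and> s l = s m}"
    "groupoid_map (inv_into M a) ` U \<in> {gcyl L l m |l m. l \<in> M \<and> m \<in> M \<and> s l = s m}"
    using a automorphism_inv(1)[OF a] by blast+
next
  fix x assume "x \<in> \<Union>{gcyl L l m |l m. l \<in> M \<and> m \<in> M \<and> s l = s m}"
  then have "fst x \<in> inf_paths L" "snd (snd x) \<in> inf_paths L"
    using gcyl_subset by blast+
  then show "groupoid_map (inv_into M a) (groupoid_map a x) = x"
    "groupoid_map a (groupoid_map (inv_into M a) x) = x"
    using groupoid_map_inv[OF a] by simp_all
qed

lemma top_groupoid_aut_groupoid_map:
  assumes a: "is_automorphism L a"
  shows "top_groupoid_aut L (groupoid_map a)"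
  unfolding top_groupoid_aut_def
proof (intro conjI ballI homeomorphic_groupoid_map[OF a])
  have "h \<in> groupoid_map a ` path_groupoid L" if h: "h \<in> path_groupoid L" for h
  proof
    show "h = groupoid_map a (groupoid_map (inv_into M a) h)"
      using groupoid_map_inv(2)[OF a] path_groupoidD[OF h] by simp
    show "groupoid_map (inv_into M a) h \<in> path_groupoid L"
      using groupoid_map_path_groupoid[OF automorphism_inv(1)[OF a] h] .
  qed
  then have "groupoid_map a ` path_groupoid L = path_groupoid L"
    using groupoid_map_path_groupoid[OF a] by blast
  moreover have "inj_on (groupoid_map a) (path_groupoid L)"
  proof (rule inj_onI)
    fix g h assume "g \<in> path_groupoid L" "h \<in> path_groupoid L" "groupoid_map a g = groupoid_map a h"
    then show "g = h"
      using groupoid_map_inv(1)[OF a] path_groupoidD by metis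
  qed
  ultimately show "bij_betw (groupoid_map a) (path_groupoid L) (path_groupoid L)"
    unfolding bij_betw_def by blast
next
  fix g h assume g: "g \<in> path_groupoid L" and h: "h \<in> path_groupoid L"
  have "path_map a (snd (snd g)) = path_map a (fst h) \<Longrightarrow> snd (snd g) = fst h"
    using path_map_inv(1)[OF a] path_groupoidD g h by metis
  then show "composable g h = composable (groupoid_map a g) (groupoid_map a h)"
    unfolding composable_def groupoid_map_def by auto
  show "composable g h \<longrightarrow> groupoid_map a (gmult g h) = gmult (groupoid_map a g) (groupoid_map a h)"
    unfolding gmult_def groupoid_map_def by simp
  show "groupoid_map a (ginv g) = ginv (groupoid_map a g)"
    unfolding ginv_def groupoid_map_def by simp
qed

end

section \<open>Rank-2 Bratteli diagrams\<close>

locale bratteli_diagram =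
  fixes L :: "'a two_graph" and V :: "nat \<Rightarrow> 'a set"
  assumes bratteli: "rank2_bratteli L V"
begin

sublocale rank2_graph L
  using bratteli unfolding rank2_bratteli_def by unfold_locales simp

lemma row_finite: "row_finite L"
  using bratteli unfolding rank2_bratteli_def by simp
lemma finite_level: "finite (V n)"
  using bratteli unfolding rank2_bratteli_def by simp
lemma level_unique: "v \<in> V n \<Longrightarrow> v \<in> V n' \<Longrightarrow> n = n'"
  using bratteli unfolding rank2_bratteli_def by blast
lemma vertices_eq_levels: "vertices L = (\<Union>n. V n)"
  using bratteli unfolding rank2_bratteli_def by simp
lemma blue_between_levels: "e \<in> blue L \<Longrightarrow> \<exists>n. r e \<in> V n \<and> s e \<in> V (Suc n)"
  using bratteli unfolding rank2_bratteli_def by simp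
lemma blue_into_vertex: "v \<in> vertices L \<Longrightarrow> \<exists>e\<in>blue L. r e = v"
  using bratteli unfolding rank2_bratteli_def by simp
lemma isolated_red_cycle: "v \<in> vertices L \<Longrightarrow> \<exists>l. red_cycle L l \<and> isolated_cycle L l \<and> lies_on L v l"
  using bratteli unfolding rank2_bratteli_def by simp
lemma red_within_level: "f \<in> red L \<Longrightarrow> \<exists>n. r f \<in> V n \<and> s f \<in> V n"
  using bratteli unfolding rank2_bratteli_def by simp

lemma vertices_iff: "v \<in> vertices L \<longleftrightarrow> v \<in> M \<and> d v = 0"
  unfolding vertices_def by simp
lemma level_vertex: "v \<in> V n \<Longrightarrow> v \<in> vertices L"
  using vertices_eq_levels by auto
lemma vertex_ident: "v \<in> vertices L \<Longrightarrow> r v = v \<and> s v = v"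
  using deg_zero_ident vertices_iff by auto
lemma range_vertex: "l \<in> M \<Longrightarrow> r l \<in> vertices L"
  using vertices_iff by simp
lemma source_vertex: "l \<in> M \<Longrightarrow> s l \<in> vertices L"
  using vertices_iff by simp
lemma redD: "f \<in> red L \<Longrightarrow> f \<in> M \<and> d f = (0,1)"
  unfolding red_def by simp
lemma blueD: "e \<in> blue L \<Longrightarrow> e \<in> M \<and> d e = (1,0)"
  unfolding blue_def by simp

definition level :: "'a \<Rightarrow> nat" where
  "level v = (THE n. v \<in> V n)"

lemma level_eq: "v \<in> V n \<Longrightarrow> level v = n"
  unfolding level_def using level_unique by blast

lemma in_level: "v \<in> vertices L \<Longrightarrow> v \<in> V (level v)"
  using vertices_eq_levels level_eq by auto

lemma red_level_iff: "f \<in> red L \<Longrightarrow> r f \<in> V n \<longleftrightarrow> s f \<in> V n"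
  using red_within_level level_unique by metis

lemma blue_source_level: "e \<in> blue L \<Longrightarrow> r e \<in> V n \<Longrightarrow> s e \<in> V (Suc n)"
  using blue_between_levels level_unique by metis

text \<open>Isolation of the red cycle through v forces the red edge into v to be unique.\<close>

lemma red_in_unique:
  assumes v: "v \<in> vertices L" and f: "f \<in> red L" "r f = v" and g: "g \<in> red L" "r g = v"
  shows "f = g"
proof -
  obtain l where rc: "red_cycle L l" and iso: "isolated_cycle L l" and on: "lies_on L v l"
    using isolated_red_cycle[OF v] by blast
  have cyc: "is_cycle L l" and fst_l: "fst (d l) = 0"
    using rc unfolding red_cycle_def by auto
  obtain k1 k2 where k: "k1 \<in> M" "k2 \<in> M" "s k1 = r k2" "l = c k1 k2" and sk1: "s k1 = v"
    and dk2: "d k2 \<noteq> 0"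
    using cycle_factor_nonzero_tail[OF cyc on] unfolding factors_def by metis
  have "fst (d k2) = 0"
    using nat_pair_fst_zero_add[of "d k1" "d k2" "d l"] k fst_l by simp
  then have le: "(0,1) \<le> d k2"
    using nat_pair_red_le dk2 by blast
  define h where "h = pre k2 (0,1)"
  have h: "h \<in> M" "d h = (0,1)" "r h = v"
    using pre_suf[OF k(2) le] range_pre[OF k(2) le] sk1 k(3) unfolding h_def by auto
  have "factors L l (c k1 h) (suf k2 (0,1))"
    using pre_suf[OF k(2) le] k h sk1 comp_assoc[of k1 h "suf k2 (0,1)"]
    unfolding factors_def h_def by auto
  moreover have "d (c k1 h) \<noteq> 0"
    using k h sk1 by (cases "d k1") (simp add: zero_prod_def)
  ultimately have iso1: "{m \<in> M. r m = r l \<and> d m = d (c k1 h)} - {c k1 h} = {}"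
    using iso unfolding isolated_cycle_def by blast
  have "x = h" if x: "x \<in> red L" "r x = v" for x
  proof -
    have "c k1 x \<in> M" "r (c k1 x) = r l" "d (c k1 x) = d (c k1 h)"
      using k x h sk1 redD by auto
    then have "c k1 x = c k1 h"
      using iso1 by blast
    then show ?thesis
      using comp_cancel_left[of k1 x h] k x h sk1 redD by auto
  qed
  then show ?thesis
    using f g by metis
qed

lemma red_out_ex:
  assumes v: "v \<in> vertices L"
  shows "\<exists>f\<in>red L. s f = v"
proof -
  obtain l where rc: "red_cycle L l" and on: "lies_on L v l"
    using isolated_red_cycle[OF v] by blast
  have cyc: "is_cycle L l" and fst_l: "fst (d l) = 0"
    using rc unfolding red_cycle_def by auto
  obtain k1 k2 where k: "k1 \<in> M" "k2 \<in> M" "s k1 = r k2" "l = c k1 k2" and sk1: "s k1 = v"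
    and dk1: "d k1 \<noteq> 0"
    using cycle_factor_nonzero_head[OF cyc on] unfolding factors_def by metis
  have "fst (d k1) = 0"
    using nat_pair_fst_zero_add[of "d k1" "d k2" "d l"] k fst_l by simp
  then have last_red: "d k1 - (d k1 - (0,1)) = (0,1)"
    using nat_pair_red_le dk1 by blast
  have le: "d k1 - (0,1) \<le> d k1"
    by (cases "d k1") (simp add: less_eq_prod_def)
  then have "suf k1 (d k1 - (0,1)) \<in> red L" "s (suf k1 (d k1 - (0,1))) = v"
    using pre_suf[OF k(1) le] source_suf[OF k(1) le] last_red sk1 unfolding red_def by auto
  then show ?thesis
    by blast
qed

definition red_level :: "nat \<Rightarrow> 'a set" where
  "red_level n = {f \<in> red L. r f \<in> V n}"

text \<open>Red edges at level n inject into V n by their ranges and surject onto V n by their sources;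
  as V n is finite, the source map is injective too.\<close>

lemma inj_on_source_red_level: "inj_on s (red_level n)"
proof -
  have inj: "inj_on r (red_level n)"
    unfolding inj_on_def red_level_def using red_in_unique level_vertex by blast
  have "r ` red_level n \<subseteq> V n"
    unfolding red_level_def by auto
  then have fin: "finite (red_level n)" and le: "card (red_level n) \<le> card (V n)"
    using inj_on_finite[OF inj _ finite_level] card_inj_on_le[OF inj _ finite_level] by auto
  have src: "s ` red_level n = V n"
  proof
    show "s ` red_level n \<subseteq> V n"
      unfolding red_level_def using red_level_iff by auto
    show "V n \<subseteq> s ` red_level n"
    proof
      fix v assume v: "v \<in> V n"
      obtain f where f: "f \<in> red L" "s f = v"
        using red_out_ex level_vertex v by blast
      then have "f \<in> red_level n"
        unfolding red_level_def using red_level_iff v by auto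
      then show "v \<in> s ` red_level n"
        using f by force
    qed
  qed
  then have "card (s ` red_level n) = card (red_level n)"
    using le card_image_le[OF fin, of s] by simp
  then show ?thesis
    using eq_card_imp_inj_on[OF fin] by blast
qed

lemma red_out_unique:
  assumes "f \<in> red L" "g \<in> red L" "s f = s g"
  shows "f = g"
proof -
  obtain n where "r f \<in> V n"
    using red_within_level assms(1) by blast
  then have "f \<in> red_level n" "g \<in> red_level n"
    unfolding red_level_def using assms red_level_iff by auto
  then show ?thesis
    using inj_on_source_red_level assms(3) unfolding inj_on_def by blast
qed

definition red_out :: "'a \<Rightarrow> 'a" where
  "red_out v = (THE f. f \<in> red L \<and> s f = v)"

lemma red_out: "v \<in> vertices L \<Longrightarrow> red_out v \<in> red L \<and> s (red_out v) = v"
  unfolding red_out_def using red_out_ex red_out_unique by (rule_tac theI') blast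

lemma red_out_eq: "f \<in> red L \<Longrightarrow> red_out (s f) = f"
  using red_out[of "s f"] red_out_unique source_vertex redD by metis

definition red_succ :: "'a \<Rightarrow> 'a" where
  "red_succ v = r (red_out v)"

lemma red_succ_level: "v \<in> V n \<Longrightarrow> red_succ v \<in> V n"
  unfolding red_succ_def using red_out[OF level_vertex] red_level_iff by metis

lemma red_succ_inj: "v \<in> vertices L \<Longrightarrow> w \<in> vertices L \<Longrightarrow> red_succ v = red_succ w \<Longrightarrow> v = w"
  unfolding red_succ_def using red_out red_in_unique range_vertex redD by metis

lemma red_succ_pow_level: "v \<in> V n \<Longrightarrow> (red_succ ^^ k) v \<in> V n"
  by (induction k) (auto simp: red_succ_level)

lemma red_succ_pow_inj:
  "v \<in> V n \<Longrightarrow> w \<in> V n \<Longrightarrow> (red_succ ^^ k) v = (red_succ ^^ k) w \<Longrightarrow> v = w"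
proof (induction k)
  case (Suc k)
  then show ?case
    using red_succ_inj red_succ_pow_level level_vertex by simp metis
qed simp

lemma red_succ_pow_surj: "(red_succ ^^ k) ` V n = V n"
proof -
  have "inj_on (red_succ ^^ k) (V n)"
    using red_succ_pow_inj unfolding inj_on_def by blast
  moreover have "(red_succ ^^ k) ` V n \<subseteq> V n"
    using red_succ_pow_level by blast
  ultimately show ?thesis
    using endo_inj_surj finite_level by blast
qed

primrec red_path :: "nat \<Rightarrow> 'a \<Rightarrow> 'a" where
  "red_path 0 v = v"
| "red_path (Suc k) v = c (red_out (r (red_path k v))) (red_path k v)"

lemma red_path:
  "v \<in> vertices L \<Longrightarrow>
    red_path k v \<in> M \<and> d (red_path k v) = (0,k) \<and> s (red_path k v) = v \<and>
    r (red_path k v) = (red_succ ^^ k) v"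
proof (induction k)
  case 0
  then show ?case
    using vertices_iff vertex_ident by (simp add: zero_prod_def)
next
  case (Suc k)
  then have "r (red_path k v) \<in> vertices L"
    using range_vertex by blast
  then show ?case
    using Suc red_out redD by (simp add: red_succ_def)
qed

lemma red_path_unique: "l \<in> M \<Longrightarrow> d l = (0,k) \<Longrightarrow> l = red_path k (s l)"
proof (induction k arbitrary: l)
  case 0
  then show ?case
    using deg_zero_ident[of l] by (simp add: zero_prod_def)
next
  case (Suc k)
  have le: "(0,1) \<le> d l"
    using Suc by (simp add: less_eq_prod_def)
  note split = pre_suf[OF Suc(2) le]
  have "suf l (0,1) = red_path k (s (suf l (0,1)))"
    by (rule Suc.IH) (use split Suc in auto)
  then have "suf l (0,1) = red_path k (s l)"
    using source_suf[OF Suc(2) le] by simp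
  moreover have "pre l (0,1) = red_out (r (suf l (0,1)))"
    using red_out_eq[of "pre l (0,1)"] split unfolding red_def by simp
  ultimately show ?case
    using split by simp
qed

lemma red_path_add:
  assumes v: "v \<in> vertices L"
  shows "red_path (q + q') v = c (red_path q ((red_succ ^^ q') v)) (red_path q' v)"
proof -
  have "(red_succ ^^ q') v \<in> vertices L"
    using red_path[OF v, of q'] range_vertex by metis
  then have "c (red_path q ((red_succ ^^ q') v)) (red_path q' v) \<in> M"
    "d (c (red_path q ((red_succ ^^ q') v)) (red_path q' v)) = (0, q + q')"
    "s (c (red_path q ((red_succ ^^ q') v)) (red_path q' v)) = v"
    using red_path[of "(red_succ ^^ q') v" q] red_path[OF v, of q'] by auto
  then show ?thesis
    using red_path_unique by metis
qed

abbreviation "F \<equiv> Fmap L"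

lemma red_blue_square:
  assumes e: "e \<in> blue L"
  defines "X \<equiv> c (red_out (r e)) e"
  shows "pre X (1,0) \<in> blue L" "suf X (1,0) = red_out (s e)" "r (pre X (1,0)) = red_succ (r e)"
    "s (pre X (1,0)) = r (suf X (1,0))" "c (pre X (1,0)) (suf X (1,0)) = X"
proof -
  have em: "e \<in> M" "d e = (1,0)" and f: "red_out (r e) \<in> red L" "s (red_out (r e)) = r e"
    using blueD e red_out range_vertex by auto
  then have X: "X \<in> M" "d X = (1,1)" "r X = red_succ (r e)" "s X = s e"
    unfolding X_def red_succ_def using redD by auto
  have le: "(1,0) \<le> d X"
    using X(2) by (simp add: less_eq_prod_def)
  note split = pre_suf[OF X(1) le]
  show "pre X (1,0) \<in> blue L" "s (pre X (1,0)) = r (suf X (1,0))"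
    "c (pre X (1,0)) (suf X (1,0)) = X"
    using split unfolding blue_def by simp_all
  show "r (pre X (1,0)) = red_succ (r e)"
    using range_pre[OF X(1) le] X(3) by simp
  have "suf X (1,0) \<in> red L"
    using split X(2) unfolding red_def by simp
  then show "suf X (1,0) = red_out (s e)"
    using red_out_eq source_suf[OF X(1) le] X(4) by metis
qed

lemma Fmap_eq:
  assumes e: "e \<in> blue L"
  shows "F e = pre (c (red_out (r e)) e) (1,0)"
  unfolding Fmap_def Let_def red_out_def[symmetric]
proof (rule the_equality)
  let ?X = "c (red_out (r e)) e"
  note sq = red_blue_square[OF e]
  show "pre ?X (1,0) \<in> blue L \<and>
      (\<exists>f'\<in>red L. s (pre ?X (1,0)) = r f' \<and> ?X = c (pre ?X (1,0)) f')"
    using sq red_out[OF source_vertex] blueD e by (metis)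
  fix e' assume "e' \<in> blue L \<and> (\<exists>f'\<in>red L. s e' = r f' \<and> ?X = c e' f')"
  then obtain f' where e': "e' \<in> blue L" "f' \<in> red L" "s e' = r f'" "?X = c e' f'"
    by blast
  then show "e' = pre ?X (1,0)"
    using factorisation_unique[of e' f' "pre ?X (1,0)" "suf ?X (1,0)"] sq blueD redD
      red_out[OF source_vertex] e by (metis (no_types, lifting) pre_suf(2) red_blue_square(2))
qed

lemma Fmap:
  assumes e: "e \<in> blue L"
  shows "F e \<in> blue L" "r (F e) = red_succ (r e)" "s (F e) = red_succ (s e)"
    "c (red_out (r e)) e = c (F e) (red_out (s e))"
  using red_blue_square[OF e] Fmap_eq[OF e] unfolding red_succ_def by metis+

lemma Fmap_inj:
  assumes e1: "e1 \<in> blue L" and e2: "e2 \<in> blue L" and eq: "F e1 = F e2"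
  shows "e1 = e2"
proof -
  have v: "r e1 \<in> vertices L" "s e1 \<in> vertices L" "r e2 \<in> vertices L" "s e2 \<in> vertices L"
    using e1 e2 blueD range_vertex source_vertex by auto
  have "r (red_out (s e1)) = r (red_out (s e2))"
    using Fmap(3)[OF e1] Fmap(3)[OF e2] eq unfolding red_succ_def by simp
  then have "red_out (s e1) = red_out (s e2)"
    using red_in_unique[of "r (red_out (s e1))"] red_out v range_vertex redD by metis
  then have "c (red_out (r e1)) e1 = c (red_out (r e2)) e2"
    using Fmap(4)[OF e1] Fmap(4)[OF e2] eq by simp
  then show ?thesis
    using factorisation_unique[of "red_out (r e1)" e1 "red_out (r e2)" e2] red_out v e1 e2 blueD redD
    by auto
qed

lemma Fmap_pow_blue: "e \<in> blue L \<Longrightarrow> (F ^^ k) e \<in> blue L"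
  by (induction k) (auto simp: Fmap)

lemma Fmap_pow:
  assumes "e \<in> blue L"
  shows "r ((F ^^ k) e) = (red_succ ^^ k) (r e)" "s ((F ^^ k) e) = (red_succ ^^ k) (s e)"
  using assms by (induction k) (auto simp: Fmap Fmap_pow_blue)

lemma Fmap_pow_inj: "x \<in> blue L \<Longrightarrow> y \<in> blue L \<Longrightarrow> (F ^^ k) x = (F ^^ k) y \<Longrightarrow> x = y"
proof (induction k)
  case (Suc k)
  then show ?case
    using Fmap_inj Fmap_pow_blue by simp
qed simp

lemma red_path_blue_swap:
  assumes e: "e \<in> blue L"
  shows "c (red_path q (r e)) e = c ((F ^^ q) e) (red_path q (s e))"
proof (induction q)
  case 0
  then show ?case
    using blueD e by simp
next
  case (Suc q)
  have v: "r e \<in> vertices L" "s e \<in> vertices L"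
    using e blueD range_vertex source_vertex by auto
  note R1 = red_path[OF v(1), of q] and R2 = red_path[OF v(2), of q]
  let ?E = "(F ^^ q) e"
  have E: "?E \<in> blue L" "?E \<in> M" "r ?E = (red_succ ^^ q) (r e)" "s ?E = (red_succ ^^ q) (s e)"
    using Fmap_pow_blue Fmap_pow e blueD by auto
  let ?g = "red_out (r ?E)" and ?g' = "red_out (s ?E)"
  have g: "?g \<in> M" "s ?g = r ?E" "?g' \<in> M" "s ?g' = s ?E"
    using red_out[OF range_vertex[OF E(2)]] red_out[OF source_vertex[OF E(2)]] redD by auto
  note FE = Fmap[OF E(1)]
  have "c (red_path (Suc q) (r e)) e = c ?g (c (red_path q (r e)) e)"
    using comp_assoc[of ?g "red_path q (r e)" e] g R1 e blueD E by simp
  also have "\<dots> = c (c ?g ?E) (red_path q (s e))"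
    using Suc comp_assoc[of ?g ?E "red_path q (s e)"] g E R2 by simp
  also have "\<dots> = c (F ?E) (c ?g' (red_path q (s e)))"
    using FE comp_assoc[of "F ?E" ?g' "red_path q (s e)"] g R2 E blueD unfolding red_succ_def by simp
  also have "c ?g' (red_path q (s e)) = red_path (Suc q) (s e)"
    using R2 E by simp
  finally show ?case
    by simp
qed

lemma red_path_blue_comp_swap:
  assumes e: "e \<in> blue L" and t: "t \<in> M" "s e = r t"
  shows "c (red_path q (r e)) (c e t) = c ((F ^^ q) e) (c (red_path q (s e)) t)"
proof -
  have v: "r e \<in> vertices L" "s e \<in> vertices L"
    using e blueD range_vertex source_vertex by auto
  have E: "(F ^^ q) e \<in> M" "s ((F ^^ q) e) = r (red_path q (s e))"
    using Fmap_pow_blue[OF e] blueD Fmap_pow(2)[OF e] red_path[OF v(2)] by auto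
  have "c (red_path q (r e)) (c e t) = c (c (red_path q (r e)) e) t"
    using comp_assoc[of "red_path q (r e)" e t] red_path[OF v(1)] e t blueD by simp
  also have "\<dots> = c ((F ^^ q) e) (c (red_path q (s e)) t)"
    using red_path_blue_swap[OF e] comp_assoc[of "(F ^^ q) e" "red_path q (s e)" t]
      E red_path[OF v(2)] t by simp
  finally show ?thesis .
qed

definition blue_level :: "nat \<Rightarrow> 'a set" where
  "blue_level n = {e \<in> blue L. r e \<in> V n}"

lemma finite_blue_level: "finite (blue_level n)"
proof -
  have "blue_level n \<subseteq> (\<Union>v\<in>V n. {l \<in> M. r l = v \<and> d l = (1,0)})"
    unfolding blue_level_def blue_def by auto
  moreover have "finite (\<Union>v\<in>V n. {l \<in> M. r l = v \<and> d l = (1,0)})"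
    using finite_level row_finite level_vertex unfolding row_finite_def by blast
  ultimately show ?thesis
    using finite_subset by blast
qed

lemma Fmap_pow_blue_level: "e \<in> blue_level n \<Longrightarrow> (F ^^ k) e \<in> blue_level n"
  unfolding blue_level_def using Fmap_pow Fmap_pow_blue red_succ_pow_level by auto

lemma Fmap_periodic:
  assumes e: "e \<in> blue_level n"
  shows "\<exists>k>0. (F ^^ k) e = e"
proof -
  have e_blue: "e \<in> blue L"
    using e unfolding blue_level_def by simp
  let ?h = "\<lambda>i. (F ^^ i) e"
  have "?h ` {0..card (blue_level n)} \<subseteq> blue_level n"
    using Fmap_pow_blue_level e by auto
  then have "\<not> inj_on ?h {0..card (blue_level n)}"
    using card_inj_on_le[OF _ _ finite_blue_level] by fastforce
  then obtain i j where ij: "i < j" "?h i = ?h j"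
    unfolding inj_on_def by (metis linorder_neqE_nat)
  have "(F ^^ i) ((F ^^ (j - i)) e) = (F ^^ i) e"
    using ij funpow_add[of i "j - i" F] by (simp add: add_diff_inverse_nat)
  then have "(F ^^ (j - i)) e = e"
    using Fmap_pow_inj Fmap_pow_blue e_blue by blast
  then show ?thesis
    using ij by (intro exI[of _ "j - i"]) auto
qed

lemma orb:
  assumes "e \<in> blue_level n"
  shows "0 < orb L e" "(F ^^ orb L e) e = e"
  using LeastI_ex[OF Fmap_periodic[OF assms]] unfolding orb_def by auto

lemma Fmap_pow_mult_Ord:
  assumes e: "e \<in> blue_level n"
  shows "(F ^^ (t * Ord_n L V n)) e = e"
proof -
  have "orb L e dvd Ord_n L V n"
    unfolding Ord_n_def using e unfolding blue_level_def by (auto intro: dvd_Lcm)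
  then have "t * Ord_n L V n mod orb L e = 0"
    by simp
  then show ?thesis
    using funpow_mod_eq[where f = F and n = "orb L e" and m = "t * Ord_n L V n"] orb(2)[OF e] by simp
qed

text \<open>The compatibility behind the definition of m_n: on sources of level-n blue edges,
  red_succ^(m_(n+1)) and red_succ^(m_n) agree, since F^(n O_n) fixes every level-n blue edge.\<close>

lemma red_succ_pow_mseq_source:
  assumes e: "e \<in> blue_level n"
  shows "(red_succ ^^ mseq L V (Suc n)) (s e) = (red_succ ^^ mseq L V n) (s e)"
proof -
  have "(red_succ ^^ (n * Ord_n L V n)) (s e) = s e"
    using Fmap_pow(2)[of e "n * Ord_n L V n"] Fmap_pow_mult_Ord[OF e, of n] e
    unfolding blue_level_def by simp
  then show ?thesis
    using funpow_add[of "mseq L V n" "n * Ord_n L V n" red_succ] by simp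
qed

definition alpha_vertex :: "'a \<Rightarrow> 'a" where
  "alpha_vertex v = (red_succ ^^ mseq L V (level v)) v"

definition alpha_edge :: "'a \<Rightarrow> 'a" where
  "alpha_edge e = (F ^^ mseq L V (level (r e))) e"

lemma alpha_edge_eq: "e \<in> blue L \<Longrightarrow> r e \<in> V n \<Longrightarrow> alpha_edge e = (F ^^ mseq L V n) e"
  unfolding alpha_edge_def using level_eq by simp

lemma alpha_vertex_level: "v \<in> V n \<Longrightarrow> alpha_vertex v \<in> V n"
  unfolding alpha_vertex_def using red_succ_pow_level by blast

lemma alpha_vertex_vertex: "v \<in> vertices L \<Longrightarrow> alpha_vertex v \<in> vertices L"
  using alpha_vertex_level in_level level_vertex by blast

lemma alpha_vertex_inj:
  assumes v: "v \<in> vertices L" and w: "w \<in> vertices L" and eq: "alpha_vertex v = alpha_vertex w"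
  shows "v = w"
proof -
  have "alpha_vertex v \<in> V (level v)" "alpha_vertex w \<in> V (level w)"
    using alpha_vertex_level in_level v w by auto
  then have "level v = level w"
    using eq level_unique by metis
  then show "v = w"
    using eq red_succ_pow_inj in_level v w unfolding alpha_vertex_def by metis
qed

lemma alpha_vertex_surj: "alpha_vertex ` V n = V n"
  using red_succ_pow_surj[of "mseq L V n" n] level_eq unfolding alpha_vertex_def
  by (simp add: image_def)

lemma alpha_vertex_red_succ_pow:
  "v \<in> vertices L \<Longrightarrow> (red_succ ^^ q) (alpha_vertex v) = alpha_vertex ((red_succ ^^ q) v)"
  unfolding alpha_vertex_def using level_eq red_succ_pow_level in_level funpow_commute by metis

lemma alpha_edge:
  assumes e: "e \<in> blue L"
  shows "alpha_edge e \<in> blue L" "r (alpha_edge e) = alpha_vertex (r e)"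
    "s (alpha_edge e) = alpha_vertex (s e)"
proof -
  define n where "n = level (r e)"
  have rn: "r e \<in> V n"
    using in_level range_vertex blueD e n_def by blast
  show "alpha_edge e \<in> blue L"
    unfolding alpha_edge_def using Fmap_pow_blue e by simp
  show "r (alpha_edge e) = alpha_vertex (r e)"
    unfolding alpha_edge_def alpha_vertex_def using Fmap_pow(1)[OF e] by simp
  have "s (alpha_edge e) = (red_succ ^^ mseq L V n) (s e)"
    unfolding alpha_edge_def using Fmap_pow(2)[OF e] n_def by simp
  also have "\<dots> = (red_succ ^^ mseq L V (Suc n)) (s e)"
    using red_succ_pow_mseq_source e rn unfolding blue_level_def by simp
  also have "\<dots> = alpha_vertex (s e)"
    unfolding alpha_vertex_def using level_eq[OF blue_source_level[OF e rn]] by simp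
  finally show "s (alpha_edge e) = alpha_vertex (s e)" .
qed

lemma alpha_edge_inj:
  assumes e: "e1 \<in> blue L" "e2 \<in> blue L" and eq: "alpha_edge e1 = alpha_edge e2"
  shows "e1 = e2"
proof -
  have "alpha_vertex (r e1) \<in> V (level (r e1))" "alpha_vertex (r e2) \<in> V (level (r e2))"
    using alpha_vertex_level in_level e blueD range_vertex by auto
  then have "level (r e1) = level (r e2)"
    using alpha_edge(2) e eq level_unique by metis
  then show "e1 = e2"
    using e eq Fmap_pow_inj unfolding alpha_edge_def by metis
qed

lemma alpha_edge_surj:
  assumes e': "e' \<in> blue L"
  shows "\<exists>e\<in>blue L. alpha_edge e = e'"
proof -
  define n where "n = level (r e')"
  let ?g = "F ^^ mseq L V n"
  have "inj_on ?g (blue_level n)"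
    using Fmap_pow_inj unfolding inj_on_def blue_level_def by blast
  moreover have "?g ` blue_level n \<subseteq> blue_level n"
    using Fmap_pow_blue_level by blast
  ultimately have "?g ` blue_level n = blue_level n"
    using endo_inj_surj finite_blue_level by blast
  moreover have "e' \<in> blue_level n"
    using in_level range_vertex blueD e' n_def unfolding blue_level_def by blast
  ultimately obtain e where "e \<in> blue_level n" "?g e = e'"
    by force
  then show ?thesis
    using level_eq unfolding alpha_edge_def blue_level_def by auto
qed

lemma alpha_edge_Fmap_pow: "e \<in> blue L \<Longrightarrow> (F ^^ q) (alpha_edge e) = alpha_edge ((F ^^ q) e)"
  unfolding alpha_edge_def
  using Fmap_pow(1) level_eq red_succ_pow_level in_level range_vertex blueD funpow_commute by metis

section \<open>The automorphism\<close>

primrec alpha_rec :: "nat \<Rightarrow> 'a \<Rightarrow> 'a" where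
  "alpha_rec 0 l = red_path (snd (d l)) (alpha_vertex (s l))"
| "alpha_rec (Suc p) l = c (alpha_edge (pre l (1,0))) (alpha_rec p (suf l (1,0)))"

definition alpha :: "'a \<Rightarrow> 'a" where
  "alpha l = alpha_rec (fst (d l)) l"

lemma blue_head:
  assumes l: "l \<in> M" and p: "fst (d l) = Suc p"
  shows "pre l (1,0) \<in> blue L" "suf l (1,0) \<in> M" "fst (d (suf l (1,0))) = p"
    "s (pre l (1,0)) = r (suf l (1,0))" "c (pre l (1,0)) (suf l (1,0)) = l"
    "r (pre l (1,0)) = r l" "s (suf l (1,0)) = s l"
proof -
  have le: "(1,0) \<le> d l"
    using p by (cases "d l") (simp add: less_eq_prod_def)
  note split = pre_suf[OF l le]
  show "pre l (1,0) \<in> blue L"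
    using split unfolding blue_def by simp
  show "suf l (1,0) \<in> M" "s (pre l (1,0)) = r (suf l (1,0))" "c (pre l (1,0)) (suf l (1,0)) = l"
    using split by auto
  show "fst (d (suf l (1,0))) = p"
    using split(4) p by (cases "d l") simp
  show "r (pre l (1,0)) = r l" "s (suf l (1,0)) = s l"
    using range_pre[OF l le] source_suf[OF l le] by auto
qed

lemma alpha_blue_head:
  assumes "l \<in> M" "fst (d l) = Suc p"
  shows "alpha l = c (alpha_edge (pre l (1,0))) (alpha (suf l (1,0)))"
  unfolding alpha_def using assms blue_head(3)[OF assms] by simp

lemma alpha_red: "fst (d l) = 0 \<Longrightarrow> alpha l = red_path (snd (d l)) (alpha_vertex (s l))"
  unfolding alpha_def by simp

lemma red_morphism_eq_red_path: "l \<in> M \<Longrightarrow> fst (d l) = 0 \<Longrightarrow> l = red_path (snd (d l)) (s l)"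
  using red_path_unique by (metis prod.collapse)

lemma alpha_morphism:
  "l \<in> M \<Longrightarrow> fst (d l) = p \<Longrightarrow>
    alpha l \<in> M \<and> d (alpha l) = d l \<and> r (alpha l) = alpha_vertex (r l) \<and>
    s (alpha l) = alpha_vertex (s l)"
proof (induction p arbitrary: l)
  case 0
  let ?k = "snd (d l)"
  have v: "s l \<in> vertices L"
    using source_vertex 0 by simp
  have "r l = r (red_path ?k (s l))"
    by (rule arg_cong[OF red_morphism_eq_red_path[OF 0]])
  also have "\<dots> = (red_succ ^^ ?k) (s l)"
    using red_path[OF v] by blast
  finally have "alpha_vertex (r l) = (red_succ ^^ ?k) (alpha_vertex (s l))"
    using alpha_vertex_red_succ_pow[OF v] by simp
  moreover have "(0, ?k) = d l"
    using 0(2) by (metis prod.collapse)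
  ultimately show ?case
    using alpha_red[OF 0(2)] red_path[OF alpha_vertex_vertex[OF v], of ?k] by simp
next
  case (Suc p)
  note D = blue_head[OF Suc.prems]
  let ?e = "pre l (1,0)" and ?t = "suf l (1,0)"
  note IH = Suc.IH[OF D(2,3)] and B = alpha_edge[OF D(1)]
  have a: "alpha l = c (alpha_edge ?e) (alpha ?t)"
    by (rule alpha_blue_head[OF Suc.prems])
  have Bm: "alpha_edge ?e \<in> M" "d (alpha_edge ?e) = d ?e" "s (alpha_edge ?e) = r (alpha ?t)"
    using B IH D(1,4) blueD by auto
  have "d l = d ?e + d ?t"
    using comp_simps(4)[of ?e ?t] D(1,2,4,5) blueD by metis
  then show ?case
    unfolding a using comp_simps[OF Bm(1) _ Bm(3)] IH Bm(2) B(2) D(6,7) by simp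
qed

lemma alpha_in_Mor: "l \<in> M \<Longrightarrow> alpha l \<in> M"
  using alpha_morphism by blast
lemma deg_alpha: "l \<in> M \<Longrightarrow> d (alpha l) = d l"
  using alpha_morphism by blast
lemma range_alpha: "l \<in> M \<Longrightarrow> r (alpha l) = alpha_vertex (r l)"
  using alpha_morphism by blast
lemma source_alpha: "l \<in> M \<Longrightarrow> s (alpha l) = alpha_vertex (s l)"
  using alpha_morphism by blast

lemma alpha_vertex_eq: "v \<in> vertices L \<Longrightarrow> alpha v = alpha_vertex v"
  using alpha_red[of v] vertices_iff vertex_ident by (simp add: zero_prod_def)

lemma alpha_blue_eq:
  assumes e: "e \<in> blue L"
  shows "alpha e = alpha_edge e"
proof -
  have em: "e \<in> M" "d e = (1,0)"
    using blueD e by auto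
  then have "pre e (1,0) = e" "suf e (1,0) = s e"
    using pre_suf_comp[of e "s e"] by auto
  then have "alpha e = c (alpha_edge e) (alpha_vertex (s e))"
    using alpha_blue_head[OF em(1), of 0] alpha_vertex_eq source_vertex em by simp
  moreover have "c (alpha_edge e) (s (alpha_edge e)) = alpha_edge e"
    using alpha_edge(1)[OF e] blueD by simp
  ultimately show ?thesis
    using alpha_edge(3)[OF e] by simp
qed

lemma alpha_red_path_comp:
  "m \<in> M \<Longrightarrow> fst (d m) = p \<Longrightarrow>
    alpha (c (red_path q (r m)) m) = c (red_path q (alpha_vertex (r m))) (alpha m)"
proof (induction p arbitrary: m)
  case 0
  let ?q' = "snd (d m)" and ?w = "s m"
  have w: "?w \<in> vertices L"
    using source_vertex 0 by simp
  have m: "m = red_path ?q' ?w" "r m = (red_succ ^^ ?q') ?w"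
    using red_morphism_eq_red_path[OF 0] red_path[OF w, of ?q'] by metis+
  then have "c (red_path q (r m)) m = red_path (q + ?q') ?w"
    using red_path_add[OF w, of q ?q'] by metis
  then have "alpha (c (red_path q (r m)) m) = red_path (q + ?q') (alpha_vertex ?w)"
    using alpha_red red_path[OF w, of "q + ?q'"] by simp
  also have "\<dots> = c (red_path q (alpha_vertex (r m))) (alpha m)"
    using red_path_add[OF alpha_vertex_vertex[OF w]] alpha_vertex_red_succ_pow[OF w] m(2)
      alpha_red 0 by simp
  finally show ?case .
next
  case (Suc p)
  note D = blue_head[OF Suc.prems]
  let ?e = "pre m (1,0)" and ?t = "suf m (1,0)"
  let ?E = "(F ^^ q) ?e" and ?T = "c (red_path q (r ?t)) ?t"
  have v: "r ?t \<in> vertices L"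
    using range_vertex D by blast
  have E: "?E \<in> blue L" "?E \<in> M" "d ?E = (1,0)"
    using Fmap_pow_blue[OF D(1)] blueD by auto
  have T: "?T \<in> M" "s ?E = r ?T"
    using red_path[OF v, of q] D Fmap_pow(2)[OF D(1)] by auto
  have "c (red_path q (r m)) m = c ?E ?T"
    using red_path_blue_comp_swap[OF D(1,2,4)] D by simp
  then have "alpha (c (red_path q (r m)) m) = c (alpha_edge ?E) (alpha ?T)"
    using alpha_blue_head[of "c ?E ?T"] pre_suf_comp[of ?E ?T] E T D by simp
  also have "alpha ?T = c (red_path q (alpha_vertex (r ?t))) (alpha ?t)"
    using Suc.IH[OF D(2,3)] .
  finally have lhs: "alpha (c (red_path q (r m)) m) =
      c (alpha_edge ?E) (c (red_path q (alpha_vertex (r ?t))) (alpha ?t))" .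
  note B = alpha_edge[OF D(1)]
  have "c (red_path q (alpha_vertex (r m))) (alpha m) =
      c (red_path q (r (alpha_edge ?e))) (c (alpha_edge ?e) (alpha ?t))"
    using alpha_blue_head[OF Suc.prems] B D by simp
  also have "\<dots> = c ((F ^^ q) (alpha_edge ?e)) (c (red_path q (s (alpha_edge ?e))) (alpha ?t))"
    using red_path_blue_comp_swap[OF B(1)] alpha_morphism[OF D(2) refl] B D by simp
  finally show ?case
    using lhs alpha_edge_Fmap_pow[OF D(1)] B D by simp
qed

lemma alpha_comp:
  "l \<in> M \<Longrightarrow> m \<in> M \<Longrightarrow> s l = r m \<Longrightarrow> fst (d l) = p \<Longrightarrow> alpha (c l m) = c (alpha l) (alpha m)"
proof (induction p arbitrary: l)
  case 0
  then have "l = red_path (snd (d l)) (r m)" "alpha l = red_path (snd (d l)) (alpha_vertex (r m))"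
    using red_morphism_eq_red_path[OF 0(1,4)] alpha_red[OF 0(4)] by metis+
  then show ?case
    using alpha_red_path_comp[OF 0(2) refl] by metis
next
  case (Suc p)
  note D = blue_head[OF Suc.prems(1,4)]
  let ?e = "pre l (1,0)" and ?t = "suf l (1,0)"
  have tm: "s ?t = r m" "c ?t m \<in> M" "s ?e = r (c ?t m)"
    using D Suc.prems comp_simps(2)[of ?t m] by auto
  have "c l m = c ?e (c ?t m)"
    using comp_assoc[of ?e ?t m] D tm Suc.prems blueD by simp
  moreover have "fst (d (c ?e (c ?t m))) = Suc (p + fst (d m))"
    using D tm Suc.prems blueD by simp
  moreover have "pre (c ?e (c ?t m)) (1,0) = ?e" "suf (c ?e (c ?t m)) (1,0) = c ?t m"
    using pre_suf_comp[of ?e "c ?t m"] D(1) tm blueD by auto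
  ultimately have "alpha (c l m) = c (alpha_edge ?e) (alpha (c ?t m))"
    using alpha_blue_head[of "c ?e (c ?t m)"] D tm blueD by simp
  also have "alpha (c ?t m) = c (alpha ?t) (alpha m)"
    using Suc.IH[OF D(2) Suc.prems(2) tm(1) D(3)] .
  also have "c (alpha_edge ?e) (c (alpha ?t) (alpha m)) = c (c (alpha_edge ?e) (alpha ?t)) (alpha m)"
  proof (rule comp_assoc[symmetric])
    show "alpha_edge ?e \<in> M" "alpha ?t \<in> M" "alpha m \<in> M"
      using alpha_edge(1)[OF D(1)] blueD alpha_morphism D(2) Suc.prems(2) by auto
    show "s (alpha_edge ?e) = r (alpha ?t)" "s (alpha ?t) = r (alpha m)"
      using alpha_edge(3)[OF D(1)] alpha_morphism[OF D(2) refl] alpha_morphism[OF Suc.prems(2) refl]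
        D(4) tm(1) by simp_all
  qed
  also have "c (alpha_edge ?e) (alpha ?t) = alpha l"
    using alpha_blue_head[OF Suc.prems(1,4)] by simp
  finally show ?case .
qed

lemma alpha_inj:
  "l \<in> M \<Longrightarrow> l' \<in> M \<Longrightarrow> fst (d l) = p \<Longrightarrow> alpha l = alpha l' \<Longrightarrow> l = l'"
proof (induction p arbitrary: l l')
  case 0
  have "alpha_vertex (s l) = alpha_vertex (s l')"
    using 0 source_alpha by metis
  then have "s l = s l'"
    using alpha_vertex_inj source_vertex 0 by blast
  moreover have "d l' = d l"
    using deg_alpha 0 by metis
  ultimately show ?case
    using red_morphism_eq_red_path 0 by metis
next
  case (Suc p)
  have p': "fst (d l') = Suc p"
    using deg_alpha Suc.prems by metis
  note D = blue_head[OF Suc.prems(1,3)] and D' = blue_head[OF Suc.prems(2) p']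
  have "c (alpha_edge (pre l (1,0))) (alpha (suf l (1,0))) =
      c (alpha_edge (pre l' (1,0))) (alpha (suf l' (1,0)))"
    using alpha_blue_head Suc.prems p' by metis
  moreover have "alpha_edge (pre l (1,0)) \<in> M" "alpha_edge (pre l' (1,0)) \<in> M"
    "d (alpha_edge (pre l (1,0))) = d (alpha_edge (pre l' (1,0)))"
    using alpha_edge(1) D(1) D'(1) blueD by auto
  moreover have "s (alpha_edge (pre l (1,0))) = r (alpha (suf l (1,0)))"
    "s (alpha_edge (pre l' (1,0))) = r (alpha (suf l' (1,0)))"
    using alpha_edge(3) alpha_morphism D D' by auto
  ultimately have "alpha_edge (pre l (1,0)) = alpha_edge (pre l' (1,0))"
    "alpha (suf l (1,0)) = alpha (suf l' (1,0))"
    using factorisation_unique alpha_in_Mor D(2) D'(2) by blast+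
  then have "pre l (1,0) = pre l' (1,0)" "suf l (1,0) = suf l' (1,0)"
    using alpha_edge_inj D D' Suc.IH by blast+
  then show ?case
    using D(5) D'(5) by metis
qed

lemma alpha_surj: "\<mu> \<in> M \<Longrightarrow> fst (d \<mu>) = p \<Longrightarrow> \<exists>l\<in>M. alpha l = \<mu>"
proof (induction p arbitrary: \<mu>)
  case 0
  obtain w where w: "w \<in> V (level (s \<mu>))" "alpha_vertex w = s \<mu>"
    using alpha_vertex_surj in_level source_vertex 0 by (metis imageE)
  then have R: "red_path (snd (d \<mu>)) w \<in> M \<and> d (red_path (snd (d \<mu>)) w) = (0, snd (d \<mu>)) \<and>
      s (red_path (snd (d \<mu>)) w) = w"
    using red_path level_vertex by blast
  then have "alpha (red_path (snd (d \<mu>)) w) = red_path (snd (d \<mu>)) (s \<mu>)"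
    using alpha_red w(2) by simp
  then show ?case
    using R red_morphism_eq_red_path[OF 0] by metis
next
  case (Suc p)
  note D = blue_head[OF Suc.prems]
  obtain e where e: "e \<in> blue L" "alpha_edge e = pre \<mu> (1,0)"
    using alpha_edge_surj D by blast
  obtain t where t: "t \<in> M" "alpha t = suf \<mu> (1,0)"
    using Suc.IH[OF D(2,3)] by blast
  have "alpha_vertex (s e) = alpha_vertex (r t)"
    using alpha_edge(3)[OF e(1)] range_alpha[OF t(1)] e t D by simp
  then have st: "s e = r t"
    using alpha_vertex_inj source_vertex range_vertex blueD e t by blast
  have "alpha (c e t) = c (alpha e) (alpha t)"
    using alpha_comp[OF _ t(1) st refl] e blueD by simp
  also have "\<dots> = \<mu>"
    using alpha_blue_eq e t D(5) by simp
  finally show ?case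
    using e t st blueD comp_simps(1) by blast
qed

lemma is_automorphism_alpha: "is_automorphism L alpha"
  unfolding is_automorphism_def
proof (intro conjI ballI impI)
  show "bij_betw alpha M M"
    unfolding bij_betw_def inj_on_def using alpha_inj alpha_surj alpha_in_Mor by blast
next
  fix l assume l: "l \<in> M"
  then show "d (alpha l) = d l" "r (alpha l) = alpha (r l)" "s (alpha l) = alpha (s l)"
    using deg_alpha range_alpha source_alpha alpha_vertex_eq range_vertex source_vertex by simp_all
next
  fix l m assume "l \<in> M" "m \<in> M" "s l = r m"
  then show "alpha (c l m) = c (alpha l) (alpha m)"
    using alpha_comp by blast
qed

context
  fixes b
  assumes b: "is_automorphism L b" and b_blue: "\<And>e. e \<in> blue L \<Longrightarrow> b e = alpha_edge e"
begin

lemma automorphism_vertex: "v \<in> vertices L \<Longrightarrow> b v = alpha_vertex v"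
  using blue_into_vertex[of v] is_automorphismD(3)[OF b] b_blue alpha_edge(2) blueD by metis

lemma automorphism_red_path: "v \<in> vertices L \<Longrightarrow> b (red_path q v) = red_path q (alpha_vertex v)"
  using red_path[of v q] is_automorphismD(1,2,4)[OF b] automorphism_vertex red_path_unique by metis

lemma automorphism_unique: "l \<in> M \<Longrightarrow> b l = alpha l"
proof (induction "fst (d l)" arbitrary: l)
  case 0
  then show ?case
    using red_morphism_eq_red_path[OF 0(2) 0(1)[symmetric]] automorphism_red_path source_vertex
      alpha_red[OF 0(1)[symmetric]] by metis
next
  case (Suc p)
  note D = blue_head[OF Suc.prems Suc.hyps(2)[symmetric]]
  have "b l = c (b (pre l (1,0))) (b (suf l (1,0)))"
    using is_automorphismD(5)[OF b] D blueD by metis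
  also have "\<dots> = alpha l"
    using b_blue D Suc.hyps alpha_blue_head[OF Suc.prems Suc.hyps(2)[symmetric]] by simp
  finally show ?case .
qed

end

end

theorem lemma7p3:
  fixes L :: "'a two_graph" and V :: "nat \<Rightarrow> 'a set"
  assumes "rank2_bratteli L V"
  shows "\<exists>a. is_automorphism L a \<and>
             (\<forall>n. \<forall>e. e \<in> blue L \<and> rg L e \<in> V n \<longrightarrow> a e = (Fmap L ^^ mseq L V n) e) \<and>
             (\<forall>b. is_automorphism L b \<and>
                  (\<forall>n. \<forall>e. e \<in> blue L \<and> rg L e \<in> V n \<longrightarrow> b e = (Fmap L ^^ mseq L V n) e)
                  \<longrightarrow> (\<forall>l\<in>Mor L. b l = a l)) \<and>
             path_map a ` inf_paths L = inf_paths L \<and>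
             homeomorphic_map (path_top L) (path_top L) (path_map a) \<and>
             top_groupoid_aut L (groupoid_map a)"
proof -
  interpret bratteli_diagram L V
    using assms by (rule bratteli_diagram.intro)
  note aut = is_automorphism_alpha
  have extends: "\<forall>n. \<forall>e. e \<in> blue L \<and> r e \<in> V n \<longrightarrow> alpha e = (F ^^ mseq L V n) e"
    using alpha_blue_eq alpha_edge_eq by simp
  have unique: "\<forall>l\<in>M. b l = alpha l"
    if "is_automorphism L b" "\<forall>n. \<forall>e. e \<in> blue L \<and> r e \<in> V n \<longrightarrow> b e = (F ^^ mseq L V n) e"
    for b
  proof (intro ballI automorphism_unique[OF that(1)])
    fix e assume e: "e \<in> blue L"
    then show "b e = alpha_edge e"
      using that(2) alpha_edge_eq in_level[OF range_vertex] blueD by metis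
  qed
  show ?thesis
    using aut extends unique path_map_image[OF aut] homeomorphic_path_map[OF aut]
      top_groupoid_aut_groupoid_map[OF aut] by blast
qed

end
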